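(* Let $n\in\mathbb{N}$, let $M\models\mathrm{I}\Delta_0+\exp$, let $K\models\mathrm{I}\Sigma_n+\exp$, and suppose $M\subseteq_{\mathrm{e}}K$. The following are equivalent: (i) $K\models M\text{-}\mathrm{I}\Sigma_{n+1}$; (ii) for every $\Sigma_{n+1}$ formula $\phi(x)$ with parameters from $K$ and every $a\in M$, $K\models\exists c\,\forall x<a\,(\phi(x)\leftrightarrow x\in c)$; (iii) for every $\Pi_n$ formula $\theta(x,y)$ with parameters from $K$ and every $a\in M$, $K\models\exists b\,\forall x<a\,(\exists y\,\theta(x,y)\leftrightarrow\exists y<b\,\theta(x,y))$.
   Context: $M\subseteq_{\mathrm{e}}K$ means $K$ is an end extension of $M$ (every element of $K\setminus M$ exceeds every element of $M$). For $M\subseteq_{\mathrm{e}}K$ models of $\mathrm{I}\Delta_0+\exp$, $K\models M\text{-}\mathrm{I}\Sigma_{n+1}$ means: for every $\Sigma_{n+1}$ formula $\phi(x)$ with parameters from $K$ and every $a\in M$, $K\models \phi(0)\wedge\forall x<a(\phi(x)\to\phi(x+1))\to\forall x<a\,\phi(x)$. For elements $x,c$, "$x\in c$" means that the $x$-th digit of the binary expansion of $c$ is $1$. *)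

theory Defs
  imports Main
begin

datatype trm = Var nat | Zero | One | Plus trm trm | Times trm trm

text \<open>BEx v t f is the bounded quantifier (exists v < t. f), BAll v t f is (forall v < t. f);
  the bound t is evaluated in the outer environment.\<close>
datatype fm =
    Eq trm trm | Lt trm trm | FF
  | Neg fm | Conj fm fm | Disj fm fm | Imp fm fm
  | Ex nat fm | All nat fm
  | BEx nat trm fm | BAll nat trm fm

fun tvars :: "trm \<Rightarrow> nat set" where
  "tvars (Var v) = {v}"
| "tvars Zero = {}"
| "tvars One = {}"
| "tvars (Plus s t) = tvars s \<union> tvars t"
| "tvars (Times s t) = tvars s \<union> tvars t"

fun fv :: "fm \<Rightarrow> nat set" where
  "fv (Eq s t) = tvars s \<union> tvars t"
| "fv (Lt s t) = tvars s \<union> tvars t"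
| "fv FF = {}"
| "fv (Neg f) = fv f"
| "fv (Conj f g) = fv f \<union> fv g"
| "fv (Disj f g) = fv f \<union> fv g"
| "fv (Imp f g) = fv f \<union> fv g"
| "fv (Ex v f) = fv f - {v}"
| "fv (All v f) = fv f - {v}"
| "fv (BEx v t f) = tvars t \<union> (fv f - {v})"
| "fv (BAll v t f) = tvars t \<union> (fv f - {v})"

record 'a struc =
  dom :: "'a set"
  zer :: 'a
  one :: 'a
  pl  :: "'a \<Rightarrow> 'a \<Rightarrow> 'a"
  tm  :: "'a \<Rightarrow> 'a \<Rightarrow> 'a"
  lt  :: "'a \<Rightarrow> 'a \<Rightarrow> bool"

definition struc_ok :: "'a struc \<Rightarrow> bool" where
  "struc_ok K \<longleftrightarrow> zer K \<in> dom K \<and> one K \<in> dom K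
     \<and> (\<forall>x\<in>dom K. \<forall>y\<in>dom K. pl K x y \<in> dom K \<and> tm K x y \<in> dom K)"

definition env_in :: "'a struc \<Rightarrow> (nat \<Rightarrow> 'a) \<Rightarrow> bool" where
  "env_in K e \<longleftrightarrow> (\<forall>i. e i \<in> dom K)"

fun eval :: "'a struc \<Rightarrow> (nat \<Rightarrow> 'a) \<Rightarrow> trm \<Rightarrow> 'a" where
  "eval K e (Var v) = e v"
| "eval K e Zero = zer K"
| "eval K e One = one K"
| "eval K e (Plus s t) = pl K (eval K e s) (eval K e t)"
| "eval K e (Times s t) = tm K (eval K e s) (eval K e t)"

fun sat :: "'a struc \<Rightarrow> (nat \<Rightarrow> 'a) \<Rightarrow> fm \<Rightarrow> bool" where
  "sat K e (Eq s t) = (eval K e s = eval K e t)"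
| "sat K e (Lt s t) = lt K (eval K e s) (eval K e t)"
| "sat K e FF = False"
| "sat K e (Neg f) = (\<not> sat K e f)"
| "sat K e (Conj f g) = (sat K e f \<and> sat K e g)"
| "sat K e (Disj f g) = (sat K e f \<or> sat K e g)"
| "sat K e (Imp f g) = (sat K e f \<longrightarrow> sat K e g)"
| "sat K e (Ex v f) = (\<exists>a\<in>dom K. sat K (e(v := a)) f)"
| "sat K e (All v f) = (\<forall>a\<in>dom K. sat K (e(v := a)) f)"
| "sat K e (BEx v t f) = (\<exists>a\<in>dom K. lt K a (eval K e t) \<and> sat K (e(v := a)) f)"
| "sat K e (BAll v t f) = (\<forall>a\<in>dom K. lt K a (eval K e t) \<longrightarrow> sat K (e(v := a)) f)"

fun delta0 :: "fm \<Rightarrow> bool" where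
  "delta0 (Eq s t) = True"
| "delta0 (Lt s t) = True"
| "delta0 FF = True"
| "delta0 (Neg f) = delta0 f"
| "delta0 (Conj f g) = (delta0 f \<and> delta0 g)"
| "delta0 (Disj f g) = (delta0 f \<and> delta0 g)"
| "delta0 (Imp f g) = (delta0 f \<and> delta0 g)"
| "delta0 (Ex v f) = False"
| "delta0 (All v f) = False"
| "delta0 (BEx v t f) = delta0 f"
| "delta0 (BAll v t f) = delta0 f"

fun hier :: "bool \<Rightarrow> nat \<Rightarrow> fm \<Rightarrow> bool" where
  "hier b 0 f = delta0 f"
| "hier True (Suc n) f = (\<exists>vs g. f = foldr Ex vs g \<and> hier False n g)"
| "hier False (Suc n) f = (\<exists>vs g. f = foldr All vs g \<and> hier True n g)"

abbreviation Sigma :: "nat \<Rightarrow> fm \<Rightarrow> bool" where "Sigma n \<equiv> hier True n"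
abbreviation Pi :: "nat \<Rightarrow> fm \<Rightarrow> bool" where "Pi n \<equiv> hier False n"

definition PAminus :: "'a struc \<Rightarrow> bool" where
  "PAminus K \<longleftrightarrow> struc_ok K \<and>
    (\<forall>x\<in>dom K. \<forall>y\<in>dom K. \<forall>z\<in>dom K.
        pl K x y = pl K y x \<and> pl K (pl K x y) z = pl K x (pl K y z)
      \<and> tm K x y = tm K y x \<and> tm K (tm K x y) z = tm K x (tm K y z)
      \<and> tm K x (pl K y z) = pl K (tm K x y) (tm K x z)
      \<and> pl K x (zer K) = x \<and> tm K x (zer K) = zer K \<and> tm K x (one K) = x
      \<and> \<not> lt K x x \<and> (lt K x y \<and> lt K y z \<longrightarrow> lt K x z)
      \<and> (lt K x y \<or> x = y \<or> lt K y x)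
      \<and> (lt K x y \<longrightarrow> lt K (pl K x z) (pl K y z))
      \<and> (lt K (zer K) z \<and> lt K x y \<longrightarrow> lt K (tm K x z) (tm K y z))
      \<and> (lt K x y \<longrightarrow> (\<exists>w\<in>dom K. pl K x w = y))
      \<and> lt K (zer K) (one K)
      \<and> (lt K (zer K) x \<longrightarrow> one K = x \<or> lt K (one K) x)
      \<and> (zer K = x \<or> lt K (zer K) x))"

definition ind :: "'a struc \<Rightarrow> fm \<Rightarrow> nat \<Rightarrow> bool" where
  "ind K f x \<longleftrightarrow> (\<forall>e. env_in K e \<longrightarrow>
     sat K (e(x := zer K)) f \<and> (\<forall>a\<in>dom K. sat K (e(x := a)) f \<longrightarrow> sat K (e(x := pl K a (one K))) f)
     \<longrightarrow> (\<forall>a\<in>dom K. sat K (e(x := a)) f))"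

text \<open>The graph of exponentiation y = 2^x is given by a Delta_0 formula eps with free
  variables vx, vy.  exp_ok K eps vx vy says that in K this formula satisfies the
  recursion clauses of 2^x and is total (the axiom exp).\<close>
definition Egraph :: "'a struc \<Rightarrow> fm \<Rightarrow> nat \<Rightarrow> nat \<Rightarrow> 'a \<Rightarrow> 'a \<Rightarrow> bool" where
  "Egraph K eps vx vy a b \<longleftrightarrow> sat K ((\<lambda>_. zer K)(vx := a, vy := b)) eps"

definition exp_ok :: "'a struc \<Rightarrow> fm \<Rightarrow> nat \<Rightarrow> nat \<Rightarrow> bool" where
  "exp_ok K eps vx vy \<longleftrightarrow> delta0 eps \<and> vx \<noteq> vy \<and> fv eps \<subseteq> {vx, vy}
    \<and> (\<forall>b\<in>dom K. Egraph K eps vx vy (zer K) b \<longleftrightarrow> b = one K)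
    \<and> (\<forall>a\<in>dom K. \<forall>c\<in>dom K. Egraph K eps vx vy (pl K a (one K)) c
          \<longleftrightarrow> (\<exists>b\<in>dom K. Egraph K eps vx vy a b \<and> c = pl K b b))
    \<and> (\<forall>a\<in>dom K. \<exists>b\<in>dom K. Egraph K eps vx vy a b)"

definition IDelta0_exp :: "'a struc \<Rightarrow> fm \<Rightarrow> nat \<Rightarrow> nat \<Rightarrow> bool" where
  "IDelta0_exp K eps vx vy \<longleftrightarrow> PAminus K \<and> (\<forall>f x. delta0 f \<longrightarrow> ind K f x) \<and> exp_ok K eps vx vy"

definition ISigma_exp :: "nat \<Rightarrow> 'a struc \<Rightarrow> fm \<Rightarrow> nat \<Rightarrow> nat \<Rightarrow> bool" where
  "ISigma_exp n K eps vx vy \<longleftrightarrow> PAminus K \<and> (\<forall>f x. Sigma n f \<longrightarrow> ind K f x) \<and> exp_ok K eps vx vy"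

text \<open>x \<in> c : the x-th binary digit of c is 1, i.e. floor(c / 2^x) is odd.\<close>
definition bit_in :: "'a struc \<Rightarrow> fm \<Rightarrow> nat \<Rightarrow> nat \<Rightarrow> 'a \<Rightarrow> 'a \<Rightarrow> bool" where
  "bit_in K eps vx vy x c \<longleftrightarrow> (\<exists>p\<in>dom K. Egraph K eps vx vy x p \<and>
     (\<exists>q\<in>dom K. \<exists>r\<in>dom K. c = pl K (tm K q p) r \<and> lt K r p
        \<and> (\<exists>s\<in>dom K. q = pl K (pl K s s) (one K))))"

definition restr :: "'a struc \<Rightarrow> 'a set \<Rightarrow> 'a struc" where
  "restr K M = K\<lparr>dom := M\<rparr>"

definition end_ext :: "'a set \<Rightarrow> 'a struc \<Rightarrow> bool" where
  "end_ext M K \<longleftrightarrow> struc_ok K \<and> M \<subseteq> dom K \<and> zer K \<in> M \<and> one K \<in> M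
    \<and> (\<forall>x\<in>M. \<forall>y\<in>M. pl K x y \<in> M \<and> tm K x y \<in> M)
    \<and> (\<forall>u\<in>M. \<forall>v\<in>dom K - M. lt K u v)"

definition M_ISigma :: "nat \<Rightarrow> 'a set \<Rightarrow> 'a struc \<Rightarrow> bool" where
  "M_ISigma k M K \<longleftrightarrow> (\<forall>f x e a. Sigma k f \<and> env_in K e \<and> a \<in> M \<longrightarrow>
     sat K (e(x := zer K)) f
     \<and> (\<forall>b\<in>dom K. lt K b a \<longrightarrow> sat K (e(x := b)) f \<longrightarrow> sat K (e(x := pl K b (one K))) f)
     \<longrightarrow> (\<forall>b\<in>dom K. lt K b a \<longrightarrow> sat K (e(x := b)) f))"

end

theory Submission
  imports Defs
begin

text \<open>
  Since \<open>K \<Turnstile> I\<Sigma>\<^sub>n\<close>, \<open>\<Pi>\<^sub>n\<close> is closed under bounded quantifiers (via collection), so a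
  \<open>\<Sigma>\<^sub>n\<^sub>+\<^sub>1\<close> set below \<open>a \<in> M\<close> has the form \<open>{u < a. \<exists>w. R u w}\<close> with \<open>R\<close> in \<open>\<Pi>\<^sub>n\<close>.
  Call \<open>d\<close> a sound code if each binary digit \<open>u < a\<close> of \<open>d\<close> has an \<open>R\<close>-witness below some
  fixed \<open>b\<close>. Given \<open>M\<close>-\<open>I\<Sigma>\<^sub>n\<^sub>+\<^sub>1\<close>, induction up to \<open>2\<^sup>a \<in> M\<close> yields the largest \<open>k < 2\<^sup>a\<close>
  such that some sound code lies in \<open>[k, 2\<^sup>a)\<close>. That code is complete, since adding \<open>2\<^sup>u\<close>
  for a missing \<open>u\<close> would give a sound code above \<open>k\<close>; so it codes the set, giving (ii),
  and \<open>b\<close> bounds the witnesses, giving (iii). Conversely, under (ii) or (iii) a \<open>\<Sigma>\<^sub>n\<^sub>+\<^sub>1\<close>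
  formula agrees below \<open>a\<close> with the \<open>\<Pi>\<^sub>n\<close> formula \<open>u \<in> c\<close>, resp. \<open>\<exists>w < b. R u w\<close>,
  and \<open>\<Pi>\<^sub>n\<close>-induction holds in \<open>K\<close>.
\<close>

lemma eval_cong: "(\<forall>i\<in>tvars t. e i = e' i) \<Longrightarrow> eval K e t = eval K e' t"
  by (induction t) auto

lemma sat_cong: "(\<forall>i\<in>fv f. e i = e' i) \<Longrightarrow> sat K e f = sat K e' f"
proof (induction f arbitrary: e e')
  case (Eq s t) then show ?case using eval_cong[of s e e' K] eval_cong[of t e e' K] by auto
next
  case (Lt s t) then show ?case using eval_cong[of s e e' K] eval_cong[of t e e' K] by auto
next
  case (Ex v f)
  then have "\<And>a. sat K (e(v := a)) f = sat K (e'(v := a)) f" by auto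
  then show ?case by simp
next
  case (All v f)
  then have "\<And>a. sat K (e(v := a)) f = sat K (e'(v := a)) f" by auto
  then show ?case by simp
next
  case (BEx v t f)
  then have "\<And>a. sat K (e(v := a)) f = sat K (e'(v := a)) f" by auto
  moreover have "eval K e t = eval K e' t" using eval_cong[of t e e' K] BEx.prems by auto
  ultimately show ?case by simp
next
  case (BAll v t f)
  then have "\<And>a. sat K (e(v := a)) f = sat K (e'(v := a)) f" by auto
  moreover have "eval K e t = eval K e' t" using eval_cong[of t e e' K] BAll.prems by auto
  ultimately show ?case by simp
next
  case (Conj f g) then show ?case by (metis UnCI fv.simps(5) sat.simps(5))
next
  case (Disj f g) then show ?case by (metis UnCI fv.simps(6) sat.simps(6))
next
  case (Imp f g) then show ?case by (metis UnCI fv.simps(7) sat.simps(7))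
qed auto

lemma finite_tvars: "finite (tvars t)"
  by (induction t) auto

lemma finite_fv: "finite (fv f)"
  by (induction f) (auto simp: finite_tvars)

lemma fresh_var: "finite (S :: nat set) \<Longrightarrow> \<exists>w. w \<notin> S"
  using ex_new_if_finite[OF infinite_UNIV_nat] by blast

lemma env_in_upd: "env_in K e \<Longrightarrow> a \<in> dom K \<Longrightarrow> env_in K (e(v := a))"
  unfolding env_in_def by auto

lemma env_in_comp: "env_in K e \<Longrightarrow> env_in K (e \<circ> s)"
  unfolding env_in_def by auto

fun rename_trm :: "(nat \<Rightarrow> nat) \<Rightarrow> trm \<Rightarrow> trm" where
  "rename_trm s (Var v) = Var (s v)"
| "rename_trm s Zero = Zero"
| "rename_trm s One = One"
| "rename_trm s (Plus a b) = Plus (rename_trm s a) (rename_trm s b)"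
| "rename_trm s (Times a b) = Times (rename_trm s a) (rename_trm s b)"

fun rename :: "(nat \<Rightarrow> nat) \<Rightarrow> fm \<Rightarrow> fm" where
  "rename s (Eq a b) = Eq (rename_trm s a) (rename_trm s b)"
| "rename s (Lt a b) = Lt (rename_trm s a) (rename_trm s b)"
| "rename s FF = FF"
| "rename s (Neg f) = Neg (rename s f)"
| "rename s (Conj f g) = Conj (rename s f) (rename s g)"
| "rename s (Disj f g) = Disj (rename s f) (rename s g)"
| "rename s (Imp f g) = Imp (rename s f) (rename s g)"
| "rename s (Ex v f) = Ex (s v) (rename s f)"
| "rename s (All v f) = All (s v) (rename s f)"
| "rename s (BEx v t f) = BEx (s v) (rename_trm s t) (rename s f)"
| "rename s (BAll v t f) = BAll (s v) (rename_trm s t) (rename s f)"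

lemma eval_rename_trm: "eval K e (rename_trm s t) = eval K (e \<circ> s) t"
  by (induction t) auto

lemma fun_upd_comp_inj: "inj s \<Longrightarrow> (e(s v := a)) \<circ> s = (e \<circ> s)(v := a)"
  by (auto simp: fun_eq_iff inj_eq)

lemma sat_rename: "inj s \<Longrightarrow> sat K e (rename s f) = sat K (e \<circ> s) f"
  by (induction f arbitrary: e) (auto simp: eval_rename_trm fun_upd_comp_inj)

lemma delta0_rename: "delta0 (rename s f) = delta0 f"
  by (induction f) auto

lemma rename_foldr_Ex: "rename s (foldr Ex vs g) = foldr Ex (map s vs) (rename s g)"
  by (induction vs) auto

lemma rename_foldr_All: "rename s (foldr All vs g) = foldr All (map s vs) (rename s g)"
  by (induction vs) auto

lemma hier_rename: "hier b j f \<Longrightarrow> hier b j (rename s f)"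
proof (induction j arbitrary: b f)
  case 0 then show ?case by (simp add: delta0_rename)
next
  case (Suc j)
  show ?case
  proof (cases b)
    case True
    with Suc.prems obtain vs g where "f = foldr Ex vs g" "hier False j g" by auto
    then show ?thesis using True Suc.IH by (auto simp: rename_foldr_Ex)
  next
    case False
    with Suc.prems obtain vs g where "f = foldr All vs g" "hier True j g" by auto
    then show ?thesis using False Suc.IH by (auto simp: rename_foldr_All)
  qed
qed

definition swap_var :: "nat \<Rightarrow> nat \<Rightarrow> nat \<Rightarrow> nat" where
  "swap_var v w i = (if i = v then w else if i = w then v else i)"

lemma inj_swap_var: "inj (swap_var v w)"
  unfolding inj_def swap_var_def by auto

lemma rename_bound_var:
  assumes "finite S"
  obtains w where "w \<notin> S"
    and "\<And>e a. sat K (e(w := a)) (rename (swap_var v w) F) = sat K (e(v := a)) F"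
proof -
  obtain w where w: "w \<notin> S \<union> fv F \<union> {v}"
    using fresh_var[of "S \<union> fv F \<union> {v}"] assms finite_fv by auto
  have "sat K (e(w := a)) (rename (swap_var v w) F) = sat K (e(v := a)) F" for e a
    unfolding sat_rename[OF inj_swap_var]
    by (rule sat_cong) (use w in \<open>auto simp: swap_var_def\<close>)
  with w that show ?thesis by blast
qed

lemma hier_Suc: "hier b j f \<Longrightarrow> hier b (Suc j) f"
proof (induction j arbitrary: b f)
  case 0
  then show ?case by (cases b) (auto intro!: exI[of _ "[]"])
next
  case (Suc j)
  show ?case
  proof (cases b)
    case True
    with Suc.prems obtain vs g where "f = foldr Ex vs g" and "hier False j g" by auto
    with Suc.IH[of False g] have "hier True (Suc (Suc j)) f" by (subst hier.simps) blast
    with True show ?thesis by simp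
  next
    case False
    with Suc.prems obtain vs g where "f = foldr All vs g" and "hier True j g" by auto
    with Suc.IH[of True g] have "hier False (Suc (Suc j)) f" by (subst hier.simps) blast
    with False show ?thesis by simp
  qed
qed

lemma hier_Suc_dual: "hier (\<not> b) j f \<Longrightarrow> hier b (Suc j) f"
  by (cases b) (auto intro!: exI[of _ "[]"])

lemma hier_mono: "hier b j f \<Longrightarrow> j \<le> k \<Longrightarrow> hier b k f"
  by (induction k) (auto simp: le_Suc_eq hier_Suc)

lemma hier_delta0: "delta0 f \<Longrightarrow> hier b j f"
  using hier_mono[of b 0 f j] by simp

lemma sat_foldr_neg:
  assumes "\<forall>e. env_in K e \<longrightarrow> sat K e g' = (\<not> sat K e g)" and "env_in K e"
  shows "sat K e (foldr All vs g') = (\<not> sat K e (foldr Ex vs g))"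
    and "sat K e (foldr Ex vs g') = (\<not> sat K e (foldr All vs g))"
  using assms(2) by (induction vs arbitrary: e) (auto simp: assms(1) env_in_upd)

lemma hier_neg:
  "hier b j f \<Longrightarrow> \<exists>f'. hier (\<not> b) j f' \<and> (\<forall>e. env_in K e \<longrightarrow> sat K e f' = (\<not> sat K e f))"
proof (induction j arbitrary: b f)
  case 0
  then show ?case by (intro exI[of _ "Neg f"]) auto
next
  case (Suc j)
  show ?case
  proof (cases b)
    case True
    with Suc.prems obtain vs g where "f = foldr Ex vs g" and "hier False j g" by auto
    moreover from Suc.IH[OF \<open>hier False j g\<close>] obtain g' where
      "hier True j g'" "\<forall>e. env_in K e \<longrightarrow> sat K e g' = (\<not> sat K e g)" by auto
    ultimately show ?thesis
      using True sat_foldr_neg(1)[of K g' g] by (intro exI[of _ "foldr All vs g'"]) auto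
  next
    case False
    with Suc.prems obtain vs g where "f = foldr All vs g" and "hier True j g" by auto
    moreover from Suc.IH[OF \<open>hier True j g\<close>] obtain g' where
      "hier False j g'" "\<forall>e. env_in K e \<longrightarrow> sat K e g' = (\<not> sat K e g)" by auto
    ultimately show ?thesis
      using False sat_foldr_neg(2)[of K g' g] by (intro exI[of _ "foldr Ex vs g'"]) auto
  qed
qed

definition definable :: "'a struc \<Rightarrow> bool \<Rightarrow> nat \<Rightarrow> ((nat \<Rightarrow> 'a) \<Rightarrow> bool) \<Rightarrow> bool" where
  "definable K b j P \<longleftrightarrow> (\<exists>f. hier b j f \<and> (\<forall>e. env_in K e \<longrightarrow> P e = sat K e f))"

definition supported :: "'a struc \<Rightarrow> ((nat \<Rightarrow> 'a) \<Rightarrow> bool) \<Rightarrow> nat set \<Rightarrow> bool" where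
  "supported K P S \<longleftrightarrow> finite S
     \<and> (\<forall>e e'. env_in K e \<longrightarrow> env_in K e' \<longrightarrow> (\<forall>i\<in>S. e i = e' i) \<longrightarrow> P e = P e')"

lemma supported_finite: "supported K P S \<Longrightarrow> finite S"
  unfolding supported_def by auto

lemma supported_eq:
  "supported K P S \<Longrightarrow> env_in K e \<Longrightarrow> env_in K e' \<Longrightarrow> (\<And>i. i \<in> S \<Longrightarrow> e i = e' i) \<Longrightarrow> P e = P e'"
  unfolding supported_def by blast

lemma supported_upd:
  "supported K P S \<Longrightarrow> i \<notin> S \<Longrightarrow> env_in K e \<Longrightarrow> a \<in> dom K \<Longrightarrow> P (e(i := a)) = P e"
  unfolding supported_def by (metis env_in_upd fun_upd_other)

lemma supported_sat: "supported K (\<lambda>e. sat K e f) (fv f)"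
  unfolding supported_def by (metis finite_fv sat_cong)

lemma definable_supported: "definable K b j P \<Longrightarrow> \<exists>S. supported K P S"
  unfolding definable_def supported_def by (metis finite_fv sat_cong)

lemma definable_cong: "definable K b j P \<Longrightarrow> (\<And>e. env_in K e \<Longrightarrow> P e = Q e) \<Longrightarrow> definable K b j Q"
  unfolding definable_def by metis

lemma definable_sat: "hier b j f \<Longrightarrow> definable K b j (\<lambda>e. sat K e f)"
  unfolding definable_def by auto

lemma definable_Suc_dual: "definable K (\<not> b) j P \<Longrightarrow> definable K b (Suc j) P"
  unfolding definable_def using hier_Suc_dual by blast

lemma definable_0: "definable K b 0 P \<Longrightarrow> definable K b' j P"
  unfolding definable_def using hier_delta0 by auto

lemma definable_rename: "inj s \<Longrightarrow> definable K b j P \<Longrightarrow> definable K b j (\<lambda>e. P (e \<circ> s))"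
  unfolding definable_def using hier_rename sat_rename env_in_comp by metis

lemma definable_neg: "definable K b j P \<Longrightarrow> definable K (\<not> b) j (\<lambda>e. \<not> P e)"
  unfolding definable_def using hier_neg by metis

lemma definable_ex:
  assumes "definable K True (Suc j) P"
  shows "definable K True (Suc j) (\<lambda>e. \<exists>a\<in>dom K. P (e(v := a)))"
proof -
  obtain f where f: "hier True (Suc j) f" "\<forall>e. env_in K e \<longrightarrow> P e = sat K e f"
    using assms unfolding definable_def by blast
  then obtain vs g where "f = foldr Ex vs g" "hier False j g" by auto
  then have "hier True (Suc j) (Ex v f)" by (subst hier.simps) (metis foldr_Cons o_apply)
  moreover have "(\<exists>a\<in>dom K. P (e(v := a))) = sat K e (Ex v f)" if "env_in K e" for e
    using f(2) that by (simp add: env_in_upd)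
  ultimately show ?thesis unfolding definable_def by blast
qed

lemma definable0_conj: "definable K b 0 P \<Longrightarrow> definable K b 0 Q \<Longrightarrow> definable K b 0 (\<lambda>e. P e \<and> Q e)"
  unfolding definable_def by (metis hier.simps(1) delta0.simps(5) sat.simps(5))

lemma definable0_disj: "definable K b 0 P \<Longrightarrow> definable K b 0 Q \<Longrightarrow> definable K b 0 (\<lambda>e. P e \<or> Q e)"
  unfolding definable_def by (metis hier.simps(1) delta0.simps(6) sat.simps(6))

lemma definable0_bex:
  "definable K b 0 P \<Longrightarrow> definable K b 0 (\<lambda>e. \<exists>a\<in>dom K. lt K a (eval K e t) \<and> P (e(u := a)))"
  unfolding definable_def by (metis delta0.simps(10) env_in_upd hier.simps(1) sat.simps(10))

lemma definable0_ball:
  "definable K b 0 P \<Longrightarrow> definable K b 0 (\<lambda>e. \<forall>a\<in>dom K. lt K a (eval K e t) \<longrightarrow> P (e(u := a)))"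
  unfolding definable_def by (metis delta0.simps(11) env_in_upd hier.simps(1) sat.simps(11))

lemma definable_eq: "definable K b j (\<lambda>e. eval K e s = eval K e t)"
  using definable_sat[OF hier_delta0, of "Eq s t"] by simp

lemma definable_lt: "definable K b j (\<lambda>e. lt K (eval K e s) (eval K e t))"
  using definable_sat[OF hier_delta0, of "Lt s t"] by simp

lemma definable_le: "definable K b j (\<lambda>e. lt K (e u) (e w) \<or> e u = e w)"
proof -
  have "definable K b 0 (\<lambda>e. lt K (e u) (e w) \<or> e u = e w)"
    using definable0_disj[OF definable_lt[of K b 0 "Var u" "Var w"] definable_eq[of K b 0 "Var u" "Var w"]]
    by simp
  then show ?thesis by (rule definable_0)
qed

section \<open>Closure of \<open>\<Sigma>\<^sub>j\<close> and \<open>\<Pi>\<^sub>j\<close> under conjunction and disjunction\<close>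

text \<open>An existential block can be pulled over a connective \<open>op\<close> that commutes with \<open>\<exists>\<close>,
  after renaming its bound variables away from the support of the other operand.\<close>

lemma definable_connective_ex_block:
  assumes op_ex: "\<And>p Y. (\<exists>a\<in>dom K. op p (Y a)) = op p (\<exists>a\<in>dom K. Y a)"
    and X: "supported K X S"
    and base: "\<And>h. hier False i h \<Longrightarrow> definable K True (Suc i) (\<lambda>e. op (X e) (sat K e h))"
  shows "hier False i g \<Longrightarrow> definable K True (Suc i) (\<lambda>e. op (X e) (sat K e (foldr Ex vs g)))"
proof (induction "length vs" arbitrary: vs g)
  case 0
  then show ?case using base by simp
next
  case (Suc N)
  then obtain v vs' where vs: "vs = v # vs'" and len: "N = length vs'" by (cases vs) auto
  let ?F = "foldr Ex vs' g" and ?s = "swap_var v"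
  obtain w where w: "w \<notin> S" and sw: "\<And>e a. sat K (e(w := a)) (rename (?s w) ?F) = sat K (e(v := a)) ?F"
    using rename_bound_var[OF supported_finite[OF X]] by metis
  have "definable K True (Suc i) (\<lambda>e. op (X e) (sat K e (rename (?s w) ?F)))"
    unfolding rename_foldr_Ex using Suc len hier_rename by simp
  then have "definable K True (Suc i) (\<lambda>e. \<exists>a\<in>dom K. op (X (e(w := a))) (sat K (e(w := a)) (rename (?s w) ?F)))"
    by (rule definable_ex)
  then show ?case
    by (rule definable_cong) (simp add: vs sw supported_upd[OF X w] op_ex cong: bex_cong)
qed

lemma definable_Sigma_Suc_connective:
  assumes op_ex: "\<And>p Y. (\<exists>a\<in>dom K. op p (Y a)) = op p (\<exists>a\<in>dom K. Y a)"
    and op_comm: "\<And>p q. op p q = op q p"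
    and Pi_op: "\<And>P Q. definable K False i P \<Longrightarrow> definable K False i Q \<Longrightarrow> definable K False i (\<lambda>e. op (P e) (Q e))"
    and P: "definable K True (Suc i) P" and Q: "definable K True (Suc i) Q"
  shows "definable K True (Suc i) (\<lambda>e. op (P e) (Q e))"
proof -
  have Sigma_repr: "\<exists>vs g. hier False i g \<and> (\<forall>e. env_in K e \<longrightarrow> R e = sat K e (foldr Ex vs g))"
    if "definable K True (Suc i) R" for R
    using that unfolding definable_def by auto
  obtain S where S: "supported K Q S" using definable_supported[OF Q] by blast
  obtain vs g where g: "hier False i g" "\<forall>e. env_in K e \<longrightarrow> P e = sat K e (foldr Ex vs g)"
    using Sigma_repr[OF P] by blast
  obtain ws h where h: "hier False i h" "\<forall>e. env_in K e \<longrightarrow> Q e = sat K e (foldr Ex ws h)"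
    using Sigma_repr[OF Q] by blast
  have Pi_Pi: "definable K True (Suc i) (\<lambda>e. op (sat K e h') (sat K e h''))"
    if "hier False i h'" "hier False i h''" for h' h''
    using Pi_op[OF definable_sat definable_sat] that by (simp add: definable_Suc_dual)
  have Pi_Sigma: "definable K True (Suc i) (\<lambda>e. op (sat K e h') (Q e))" if "hier False i h'" for h'
  proof -
    have "definable K True (Suc i) (\<lambda>e. op (sat K e h') (sat K e (foldr Ex ws h)))"
      by (rule definable_connective_ex_block[OF op_ex supported_sat]) (use Pi_Pi that h(1) in auto)
    then show ?thesis by (rule definable_cong) (simp add: h(2))
  qed
  have Sigma_Pi: "definable K True (Suc i) (\<lambda>e. op (Q e) (sat K e h'))" if "hier False i h'" for h'
    using Pi_Sigma[OF that] op_comm by simp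
  have "definable K True (Suc i) (\<lambda>e. op (Q e) (sat K e (foldr Ex vs g)))"
    by (rule definable_connective_ex_block[OF op_ex S Sigma_Pi g(1)])
  then show ?thesis
    by (rule definable_cong) (simp add: g(2) op_comm)
qed

lemma definable_conj_of_disj:
  assumes "\<And>P Q. definable K (\<not> b) j P \<Longrightarrow> definable K (\<not> b) j Q \<Longrightarrow> definable K (\<not> b) j (\<lambda>e. P e \<or> Q e)"
    and "definable K b j P" and "definable K b j Q"
  shows "definable K b j (\<lambda>e. P e \<and> Q e)"
proof -
  have "definable K (\<not> b) j (\<lambda>e. \<not> P e \<or> \<not> Q e)"
    using assms definable_neg by blast
  then have "definable K b j (\<lambda>e. \<not> (\<not> P e \<or> \<not> Q e))"
    using definable_neg by fastforce
  then show ?thesis by (rule definable_cong) simp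
qed

lemma definable_disj_of_conj:
  assumes "\<And>P Q. definable K (\<not> b) j P \<Longrightarrow> definable K (\<not> b) j Q \<Longrightarrow> definable K (\<not> b) j (\<lambda>e. P e \<and> Q e)"
    and "definable K b j P" and "definable K b j Q"
  shows "definable K b j (\<lambda>e. P e \<or> Q e)"
proof -
  have "definable K (\<not> b) j (\<lambda>e. \<not> P e \<and> \<not> Q e)"
    using assms definable_neg by blast
  then have "definable K b j (\<lambda>e. \<not> (\<not> P e \<and> \<not> Q e))"
    using definable_neg by fastforce
  then show ?thesis by (rule definable_cong) simp
qed

lemma definable_Sigma_conj_disj:
  assumes nonempty: "dom K \<noteq> {}"
  shows "definable K True j P \<Longrightarrow> definable K True j Q
    \<Longrightarrow> definable K True j (\<lambda>e. P e \<and> Q e) \<and> definable K True j (\<lambda>e. P e \<or> Q e)"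
proof (induction j arbitrary: P Q)
  case 0
  then show ?case using definable0_conj definable0_disj by blast
next
  case (Suc i)
  have Pi_conj: "definable K False i (\<lambda>e. P e \<and> Q e)"
    if "definable K False i P" "definable K False i Q" for P Q
    using definable_conj_of_disj[where b=False, simplified] Suc.IH that by blast
  have Pi_disj: "definable K False i (\<lambda>e. P e \<or> Q e)"
    if "definable K False i P" "definable K False i Q" for P Q
    using definable_disj_of_conj[where b=False, simplified] Suc.IH that by blast
  have ex_disj: "(\<exists>a\<in>dom K. p \<or> Y a) = (p \<or> (\<exists>a\<in>dom K. Y a))" for p Y
    using nonempty by blast
  show ?case
    using definable_Sigma_Suc_connective[of K "(\<and>)", OF _ _ Pi_conj Suc.prems]
      definable_Sigma_Suc_connective[of K "(\<or>)", OF ex_disj _ Pi_disj Suc.prems]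
    by blast
qed

lemma definable_conj:
  assumes "dom K \<noteq> {}" "definable K b j P" "definable K b j Q"
  shows "definable K b j (\<lambda>e. P e \<and> Q e)"
proof (cases b)
  case True with definable_Sigma_conj_disj[OF assms(1)] assms(2,3) show ?thesis by simp
next
  case False
  have "definable K False j (\<lambda>e. P e \<and> Q e)"
    by (rule definable_conj_of_disj[where b=False, simplified])
      (use definable_Sigma_conj_disj[OF assms(1)] assms(2,3) False in auto)
  with False show ?thesis by simp
qed

lemma definable_disj:
  assumes "dom K \<noteq> {}" "definable K b j P" "definable K b j Q"
  shows "definable K b j (\<lambda>e. P e \<or> Q e)"
proof (cases b)
  case True with definable_Sigma_conj_disj[OF assms(1)] assms(2,3) show ?thesis by simp
next
  case False
  have "definable K False j (\<lambda>e. P e \<or> Q e)"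
    by (rule definable_disj_of_conj[where b=False, simplified])
      (use definable_Sigma_conj_disj[OF assms(1)] assms(2,3) False in auto)
  with False show ?thesis by simp
qed

locale pa_minus =
  fixes K :: "'a struc"
  assumes PA: "PAminus K"
begin

abbreviation D where "D \<equiv> dom K"
abbreviation Kzero ("\<zero>") where "\<zero> \<equiv> zer K"
abbreviation Kone ("\<one>") where "\<one> \<equiv> one K"
abbreviation Kadd (infixl "\<oplus>" 65) where "x \<oplus> y \<equiv> pl K x y"
abbreviation Kmul (infixl "\<otimes>" 70) where "x \<otimes> y \<equiv> tm K x y"
abbreviation Kless (infix "\<prec>" 50) where "x \<prec> y \<equiv> lt K x y"
abbreviation Kle (infix "\<preceq>" 50) where "x \<preceq> y \<equiv> lt K x y \<or> x = y"

lemma struc_ok: "struc_ok K"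
  using PA unfolding PAminus_def by auto

lemma zero_dom[simp]: "\<zero> \<in> D"
  using struc_ok unfolding struc_ok_def by auto

lemma one_dom[simp]: "\<one> \<in> D"
  using struc_ok unfolding struc_ok_def by auto

lemma add_dom[simp]: "x \<in> D \<Longrightarrow> y \<in> D \<Longrightarrow> x \<oplus> y \<in> D"
  using struc_ok unfolding struc_ok_def by auto

lemma mul_dom[simp]: "x \<in> D \<Longrightarrow> y \<in> D \<Longrightarrow> x \<otimes> y \<in> D"
  using struc_ok unfolding struc_ok_def by auto

lemma dom_nonempty: "D \<noteq> {}"
  using zero_dom by blast

lemma PA_axioms:
  assumes "x \<in> D" "y \<in> D" "z \<in> D"
  shows "x \<oplus> y = y \<oplus> x"
    and "x \<oplus> y \<oplus> z = x \<oplus> (y \<oplus> z)"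
    and "x \<otimes> y = y \<otimes> x"
    and "x \<otimes> y \<otimes> z = x \<otimes> (y \<otimes> z)"
    and "x \<otimes> (y \<oplus> z) = x \<otimes> y \<oplus> x \<otimes> z"
    and "x \<oplus> \<zero> = x"
    and "x \<otimes> \<zero> = \<zero>"
    and "x \<otimes> \<one> = x"
    and "\<not> x \<prec> x"
    and "x \<prec> y \<Longrightarrow> y \<prec> z \<Longrightarrow> x \<prec> z"
    and "x \<prec> y \<or> x = y \<or> y \<prec> x"
    and "x \<prec> y \<Longrightarrow> x \<oplus> z \<prec> y \<oplus> z"
    and "\<zero> \<prec> z \<Longrightarrow> x \<prec> y \<Longrightarrow> x \<otimes> z \<prec> y \<otimes> z"
    and "x \<prec> y \<Longrightarrow> \<exists>w\<in>D. x \<oplus> w = y"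
    and "\<zero> \<prec> \<one>"
    and "\<zero> \<prec> x \<Longrightarrow> \<one> = x \<or> \<one> \<prec> x"
    and "\<zero> = x \<or> \<zero> \<prec> x"
  using PA assms unfolding PAminus_def by blast+

lemma add_comm: "x \<in> D \<Longrightarrow> y \<in> D \<Longrightarrow> x \<oplus> y = y \<oplus> x"
  using PA_axioms(1)[of x y x] by blast

lemma add_assoc: "x \<in> D \<Longrightarrow> y \<in> D \<Longrightarrow> z \<in> D \<Longrightarrow> x \<oplus> y \<oplus> z = x \<oplus> (y \<oplus> z)"
  using PA_axioms(2)[of x y z] by blast

lemma add_lcomm: "x \<in> D \<Longrightarrow> y \<in> D \<Longrightarrow> z \<in> D \<Longrightarrow> x \<oplus> (y \<oplus> z) = y \<oplus> (x \<oplus> z)"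
  by (metis add_assoc add_comm)

lemma mul_comm: "x \<in> D \<Longrightarrow> y \<in> D \<Longrightarrow> x \<otimes> y = y \<otimes> x"
  using PA_axioms(3)[of x y x] by blast

lemma mul_assoc: "x \<in> D \<Longrightarrow> y \<in> D \<Longrightarrow> z \<in> D \<Longrightarrow> x \<otimes> y \<otimes> z = x \<otimes> (y \<otimes> z)"
  using PA_axioms(4)[of x y z] by blast

lemma mul_lcomm: "x \<in> D \<Longrightarrow> y \<in> D \<Longrightarrow> z \<in> D \<Longrightarrow> x \<otimes> (y \<otimes> z) = y \<otimes> (x \<otimes> z)"
  by (metis mul_assoc mul_comm)

lemma distrib_left: "x \<in> D \<Longrightarrow> y \<in> D \<Longrightarrow> z \<in> D \<Longrightarrow> x \<otimes> (y \<oplus> z) = x \<otimes> y \<oplus> x \<otimes> z"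
  using PA_axioms(5)[of x y z] by blast

lemma distrib_right: "x \<in> D \<Longrightarrow> y \<in> D \<Longrightarrow> z \<in> D \<Longrightarrow> (y \<oplus> z) \<otimes> x = y \<otimes> x \<oplus> z \<otimes> x"
  by (metis distrib_left mul_comm add_dom)

lemma add0[simp]: "x \<in> D \<Longrightarrow> x \<oplus> \<zero> = x"
  using PA_axioms(6)[of x x x] by blast

lemma add0l[simp]: "x \<in> D \<Longrightarrow> \<zero> \<oplus> x = x"
  using add0 add_comm by (metis zero_dom)

lemma mul0[simp]: "x \<in> D \<Longrightarrow> x \<otimes> \<zero> = \<zero>"
  using PA_axioms(7)[of x x x] by blast

lemma mul0l[simp]: "x \<in> D \<Longrightarrow> \<zero> \<otimes> x = \<zero>"
  by (metis mul0 mul_comm zero_dom)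

lemma mul1[simp]: "x \<in> D \<Longrightarrow> x \<otimes> \<one> = x"
  using PA_axioms(8)[of x x x] by blast

lemma mul1l[simp]: "x \<in> D \<Longrightarrow> \<one> \<otimes> x = x"
  by (metis mul1 mul_comm one_dom)

lemmas ac = add_assoc add_comm add_lcomm mul_assoc mul_comm mul_lcomm distrib_left distrib_right

lemma irrefl[simp]: "x \<in> D \<Longrightarrow> \<not> x \<prec> x"
  using PA_axioms(9)[of x x x] by blast

lemma trans: "x \<in> D \<Longrightarrow> y \<in> D \<Longrightarrow> z \<in> D \<Longrightarrow> x \<prec> y \<Longrightarrow> y \<prec> z \<Longrightarrow> x \<prec> z"
  using PA_axioms(10)[of x y z] by blast

lemma less_trichotomy: "x \<in> D \<Longrightarrow> y \<in> D \<Longrightarrow> x \<prec> y \<or> x = y \<or> y \<prec> x"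
  using PA_axioms(11)[of x y x] by blast

lemma asym: "x \<in> D \<Longrightarrow> y \<in> D \<Longrightarrow> x \<prec> y \<Longrightarrow> \<not> y \<prec> x"
  using trans irrefl by blast

lemma not_less: "x \<in> D \<Longrightarrow> y \<in> D \<Longrightarrow> (\<not> x \<prec> y) = (y \<preceq> x)"
  using less_trichotomy asym irrefl by blast

lemma le_trans: "x \<in> D \<Longrightarrow> y \<in> D \<Longrightarrow> z \<in> D \<Longrightarrow> x \<preceq> y \<Longrightarrow> y \<preceq> z \<Longrightarrow> x \<preceq> z"
  using trans by blast

lemma less_le_trans: "x \<in> D \<Longrightarrow> y \<in> D \<Longrightarrow> z \<in> D \<Longrightarrow> x \<prec> y \<Longrightarrow> y \<preceq> z \<Longrightarrow> x \<prec> z"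
  using trans by blast

lemma le_less_trans: "x \<in> D \<Longrightarrow> y \<in> D \<Longrightarrow> z \<in> D \<Longrightarrow> x \<preceq> y \<Longrightarrow> y \<prec> z \<Longrightarrow> x \<prec> z"
  using trans by blast

lemma zero_le: "x \<in> D \<Longrightarrow> \<zero> \<preceq> x"
  using PA_axioms(17)[of x x x] by blast

lemma not_less0[simp]: "x \<in> D \<Longrightarrow> \<not> x \<prec> \<zero>"
  using zero_le asym by (metis irrefl zero_dom)

lemma zero_less_one[simp]: "\<zero> \<prec> \<one>"
  using PA_axioms(15)[of "\<zero>" "\<zero>" "\<zero>"] by simp

lemma add_less_mono_r: "x \<in> D \<Longrightarrow> y \<in> D \<Longrightarrow> z \<in> D \<Longrightarrow> x \<prec> y \<Longrightarrow> x \<oplus> z \<prec> y \<oplus> z"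
  using PA_axioms(12)[of x y z] by blast

lemma add_cancel_r: "x \<in> D \<Longrightarrow> y \<in> D \<Longrightarrow> z \<in> D \<Longrightarrow> x \<oplus> z = y \<oplus> z \<Longrightarrow> x = y"
  by (metis add_less_mono_r less_trichotomy irrefl add_dom)

lemma add_cancel_l: "x \<in> D \<Longrightarrow> y \<in> D \<Longrightarrow> z \<in> D \<Longrightarrow> z \<oplus> x = z \<oplus> y \<Longrightarrow> x = y"
  by (metis add_cancel_r add_comm)

lemma add_less_cancel_r: "x \<in> D \<Longrightarrow> y \<in> D \<Longrightarrow> z \<in> D \<Longrightarrow> (x \<oplus> z \<prec> y \<oplus> z) = (x \<prec> y)"
  by (metis add_less_mono_r less_trichotomy asym irrefl add_dom)

lemma add_less_cancel_l: "x \<in> D \<Longrightarrow> y \<in> D \<Longrightarrow> z \<in> D \<Longrightarrow> (z \<oplus> x \<prec> z \<oplus> y) = (x \<prec> y)"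
  by (metis add_less_cancel_r add_comm)

lemma add_le_cancel_l: "x \<in> D \<Longrightarrow> y \<in> D \<Longrightarrow> z \<in> D \<Longrightarrow> (z \<oplus> x \<preceq> z \<oplus> y) = (x \<preceq> y)"
  by (metis add_less_cancel_l add_cancel_l)

lemma add_le_cancel_r: "x \<in> D \<Longrightarrow> y \<in> D \<Longrightarrow> z \<in> D \<Longrightarrow> (x \<oplus> z \<preceq> y \<oplus> z) = (x \<preceq> y)"
  by (metis add_less_cancel_r add_cancel_r)

lemma le_add: "x \<in> D \<Longrightarrow> y \<in> D \<Longrightarrow> x \<preceq> x \<oplus> y"
  by (metis add0 add_le_cancel_l zero_le zero_dom)

lemma le_add2: "x \<in> D \<Longrightarrow> y \<in> D \<Longrightarrow> x \<preceq> y \<oplus> x"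
  by (metis le_add add_comm)

lemma less_add: "x \<in> D \<Longrightarrow> y \<in> D \<Longrightarrow> \<zero> \<prec> y \<Longrightarrow> x \<prec> x \<oplus> y"
  by (metis add0 add_less_cancel_l zero_dom)

lemma less_add1[simp]: "x \<in> D \<Longrightarrow> x \<prec> x \<oplus> \<one>"
  by (simp add: less_add)

lemma add_le_mono: "x \<in> D \<Longrightarrow> y \<in> D \<Longrightarrow> u \<in> D \<Longrightarrow> v \<in> D \<Longrightarrow> x \<preceq> y \<Longrightarrow> u \<preceq> v \<Longrightarrow> x \<oplus> u \<preceq> y \<oplus> v"
proof -
  assume a: "x \<in> D" "y \<in> D" "u \<in> D" "v \<in> D" "x \<preceq> y" "u \<preceq> v"
  have 1: "x \<oplus> u \<preceq> y \<oplus> u" using add_le_cancel_r[of x y u] a by simp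
  have 2: "y \<oplus> u \<preceq> y \<oplus> v" using add_le_cancel_l[of u v y] a by simp
  show ?thesis using le_trans[OF _ _ _ 1 2] a by simp
qed

lemma less_imp_add: "x \<in> D \<Longrightarrow> y \<in> D \<Longrightarrow> x \<prec> y \<Longrightarrow> \<exists>w\<in>D. x \<oplus> w = y"
  using PA_axioms(14)[of x y x] by blast

lemma pos_ge1: "x \<in> D \<Longrightarrow> \<zero> \<prec> x \<Longrightarrow> \<one> \<preceq> x"
  using PA_axioms(16)[of x x x] by blast

lemma nonzero_pos: "x \<in> D \<Longrightarrow> x \<noteq> \<zero> \<Longrightarrow> \<zero> \<prec> x"
  using PA_axioms(17)[of x x x] by blast

lemma less_succ_le: "x \<in> D \<Longrightarrow> y \<in> D \<Longrightarrow> x \<prec> y \<Longrightarrow> x \<oplus> \<one> \<preceq> y"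
proof -
  assume xy: "x \<in> D" "y \<in> D" "x \<prec> y"
  then obtain w where w: "w \<in> D" "x \<oplus> w = y" using less_imp_add by blast
  then have "w \<noteq> \<zero>" using xy by auto
  then have "\<one> \<preceq> w" using pos_ge1 nonzero_pos w by blast
  then show ?thesis using add_le_cancel_l[of "\<one>" w x] w xy by auto
qed

lemma less_Suc: "x \<in> D \<Longrightarrow> y \<in> D \<Longrightarrow> (x \<prec> y \<oplus> \<one>) = (x \<preceq> y)"
  by (metis less_succ_le not_less add_dom one_dom less_add1 le_less_trans asym)

lemma le_less_Suc: "x \<in> D \<Longrightarrow> y \<in> D \<Longrightarrow> x \<preceq> y \<Longrightarrow> x \<prec> y \<oplus> \<one>"
  using less_Suc by blast

lemma eq_Suc_pred: "x \<in> D \<Longrightarrow> x \<noteq> \<zero> \<Longrightarrow> \<exists>y\<in>D. x = y \<oplus> \<one>"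
  by (metis less_imp_add nonzero_pos pos_ge1 add0l add_comm zero_dom one_dom)

lemma mul_less_mono_r: "x \<in> D \<Longrightarrow> y \<in> D \<Longrightarrow> z \<in> D \<Longrightarrow> \<zero> \<prec> z \<Longrightarrow> x \<prec> y \<Longrightarrow> x \<otimes> z \<prec> y \<otimes> z"
  using PA_axioms(13)[of x y z] by blast

lemma mul_le_mono_r: "x \<in> D \<Longrightarrow> y \<in> D \<Longrightarrow> z \<in> D \<Longrightarrow> x \<preceq> y \<Longrightarrow> x \<otimes> z \<preceq> y \<otimes> z"
  by (metis mul_less_mono_r nonzero_pos mul0)

lemma mul_less_cancel_r: "x \<in> D \<Longrightarrow> y \<in> D \<Longrightarrow> z \<in> D \<Longrightarrow> x \<otimes> z \<prec> y \<otimes> z \<Longrightarrow> x \<prec> y"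
  by (metis mul_le_mono_r not_less mul_dom)

lemma le_mul: "x \<in> D \<Longrightarrow> p \<in> D \<Longrightarrow> \<one> \<preceq> p \<Longrightarrow> x \<preceq> x \<otimes> p"
  by (metis mul1 mul_comm mul_le_mono_r one_dom)

lemma div_unique:
  assumes "q \<in> D" "r \<in> D" "q' \<in> D" "r' \<in> D" "p \<in> D" "r \<prec> p" "r' \<prec> p" "q \<otimes> p \<oplus> r = q' \<otimes> p \<oplus> r'"
  shows "q = q' \<and> r = r'"
proof -
  have *: "False" if "a \<in> D" "b \<in> D" "s \<in> D" "t \<in> D" "s \<prec> p" "t \<prec> p" "a \<prec> b" "a \<otimes> p \<oplus> s = b \<otimes> p \<oplus> t" for a b s t
  proof -
    have "a \<oplus> \<one> \<preceq> b" using less_succ_le that by blast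
    then have "(a \<oplus> \<one>) \<otimes> p \<preceq> b \<otimes> p" using mul_le_mono_r that assms by simp
    then have A: "a \<otimes> p \<oplus> p \<preceq> b \<otimes> p" using distrib_right that assms by simp
    have B: "b \<otimes> p \<preceq> b \<otimes> p \<oplus> t" using le_add that assms by simp
    have C: "a \<otimes> p \<oplus> s \<prec> a \<otimes> p \<oplus> p" using add_less_cancel_l[of s p "a \<otimes> p"] that(1,3,5) assms(5) by simp
    have X: "a \<otimes> p \<oplus> s \<prec> b \<otimes> p" by (rule less_le_trans[OF _ _ _ C A]) (use that assms in simp_all)
    have Y: "a \<otimes> p \<oplus> s \<prec> b \<otimes> p \<oplus> t" by (rule less_le_trans[OF _ _ _ X B]) (use that assms in simp_all)
    then have "b \<otimes> p \<oplus> t \<prec> b \<otimes> p \<oplus> t" unfolding that(8) .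
    then show False using that assms irrefl by simp
  qed
  have "q = q'" using *[of q q' r r'] *[of q' q r' r] assms less_trichotomy by metis
  then show ?thesis using assms add_cancel_l by (metis mul_dom)
qed

definition is_even where "is_even x \<longleftrightarrow> (\<exists>s\<in>D. x = s \<oplus> s)"

definition is_odd where "is_odd x \<longleftrightarrow> (\<exists>s\<in>D. x = s \<oplus> s \<oplus> \<one>)"

lemma not_even_odd: "x \<in> D \<Longrightarrow> is_even x \<Longrightarrow> is_odd x \<Longrightarrow> False"
proof -
  assume x: "x \<in> D" "is_even x" "is_odd x"
  then obtain s t where st: "s \<in> D" "t \<in> D" "s \<oplus> s = t \<oplus> t \<oplus> \<one>" unfolding is_even_def is_odd_def by metis
  show False
  proof (cases "s \<preceq> t")
    case True
    then have "s \<oplus> s \<preceq> t \<oplus> t" using add_le_mono st by blast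
    then show False using st by (metis add_dom one_dom less_add1 le_less_trans irrefl)
  next
    case False
    then have "t \<prec> s" using not_less st by blast
    then have "t \<oplus> \<one> \<preceq> s" using less_succ_le st by blast
    then have "t \<oplus> \<one> \<oplus> (t \<oplus> \<one>) \<preceq> s \<oplus> s" using add_le_mono[of "t \<oplus> \<one>" s "t \<oplus> \<one>" s] st(1,2) by simp
    moreover have "t \<oplus> t \<oplus> \<one> \<prec> t \<oplus> \<one> \<oplus> (t \<oplus> \<one>)" using st
      by (metis add_assoc add_lcomm less_add1 add_dom one_dom)
    ultimately show False using st by (metis add_dom one_dom less_le_trans irrefl)
  qed
qed

lemma even_add: "x \<in> D \<Longrightarrow> y \<in> D \<Longrightarrow> is_even x \<Longrightarrow> is_even y \<Longrightarrow> is_even (x \<oplus> y)"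
  unfolding is_even_def by (metis add_assoc add_lcomm add_dom)

lemma odd_add_even: "x \<in> D \<Longrightarrow> y \<in> D \<Longrightarrow> is_odd x \<Longrightarrow> is_even y \<Longrightarrow> is_odd (x \<oplus> y)"
  unfolding is_even_def is_odd_def by (smt (verit) add_assoc add_comm add_lcomm add_dom one_dom)

lemma even_mul: "x \<in> D \<Longrightarrow> y \<in> D \<Longrightarrow> is_even y \<Longrightarrow> is_even (x \<otimes> y)"
  unfolding is_even_def by (metis distrib_left mul_dom)

lemma even_Suc: "x \<in> D \<Longrightarrow> is_even x \<Longrightarrow> is_odd (x \<oplus> \<one>)"
  unfolding is_even_def is_odd_def by blast

lemma even_less: "x \<in> D \<Longrightarrow> y \<in> D \<Longrightarrow> is_even x \<Longrightarrow> is_even y \<Longrightarrow> x \<prec> y \<Longrightarrow> x \<oplus> \<one> \<prec> y"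
  by (metis less_succ_le even_Suc not_even_odd add_dom one_dom)

lemma less_sum3:
  assumes "a \<in> D" "b \<in> D" "c \<in> D"
  shows "a \<prec> a \<oplus> b \<oplus> c \<oplus> \<one>" and "b \<prec> a \<oplus> b \<oplus> c \<oplus> \<one>" and "c \<prec> a \<oplus> b \<oplus> c \<oplus> \<one>"
proof -
  have 1: "a \<oplus> b \<oplus> c \<prec> a \<oplus> b \<oplus> c \<oplus> \<one>" using assms by simp
  have 2: "a \<oplus> b \<prec> a \<oplus> b \<oplus> c \<oplus> \<one>" by (rule le_less_trans[OF _ _ _ le_add 1]) (use assms in simp_all)
  show "c \<prec> a \<oplus> b \<oplus> c \<oplus> \<one>" by (rule le_less_trans[OF _ _ _ le_add2 1]) (use assms in simp_all)
  show "a \<prec> a \<oplus> b \<oplus> c \<oplus> \<one>" by (rule le_less_trans[OF _ _ _ le_add 2]) (use assms in simp_all)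
  show "b \<prec> a \<oplus> b \<oplus> c \<oplus> \<one>" by (rule le_less_trans[OF _ _ _ le_add2 2]) (use assms in simp_all)
qed

lemma less_common_bound: "a \<in> D \<Longrightarrow> c \<in> D \<Longrightarrow> \<exists>b\<in>D. a \<prec> b \<and> c \<prec> b"
  using less_sum3[of a c "\<zero>"] by auto

lemma bounded_witnesses_Suc:
  assumes D: "t \<in> D" "b \<in> D" "c0 \<in> D"
    and below: "\<forall>a\<in>D. a \<prec> t \<longrightarrow> (\<exists>c\<in>D. c \<prec> b \<and> R a c)" and at: "R t c0"
  shows "\<exists>m\<in>D. \<forall>a\<in>D. a \<prec> t \<oplus> \<one> \<longrightarrow> (\<exists>c\<in>D. c \<prec> m \<and> R a c)"
proof -
  obtain m where m: "m \<in> D" "b \<prec> m" "c0 \<prec> m" using less_common_bound D(2,3) by blast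
  have "\<exists>c\<in>D. c \<prec> m \<and> R a c" if a: "a \<in> D" "a \<prec> t \<oplus> \<one>" for a
  proof (cases "a = t")
    case True
    with D at m show ?thesis by blast
  next
    case False
    then have "a \<prec> t" using a less_Suc D(1) by blast
    then obtain c where "c \<in> D" "c \<prec> b" "R a c" using below a by blast
    with m D show ?thesis using trans[of c b m] by blast
  qed
  with m show ?thesis by blast
qed

lemma ind_induct:
  assumes ind: "ind K f x" and e: "env_in K e" and val: "\<And>a. a \<in> D \<Longrightarrow> sat K (e(x := a)) f = Q a"
    and base: "Q \<zero>" and step: "\<And>a. a \<in> D \<Longrightarrow> Q a \<Longrightarrow> Q (a \<oplus> \<one>)" and a: "a \<in> D"
  shows "Q a"
proof -
  have "\<forall>a\<in>D. sat K (e(x := a)) f"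
    using ind[unfolded ind_def, rule_format, OF e] by (simp add: val base step)
  with a val show ?thesis by simp
qed

lemma definable_induct:
  assumes ind: "\<And>f. hier True j f \<Longrightarrow> ind K f x" and P: "definable K True j P" and e: "env_in K e"
    and val: "\<And>a. a \<in> D \<Longrightarrow> P (e(x := a)) = Q a"
    and base: "Q \<zero>" and step: "\<And>a. a \<in> D \<Longrightarrow> Q a \<Longrightarrow> Q (a \<oplus> \<one>)" and a: "a \<in> D"
  shows "Q a"
proof -
  obtain f where f: "hier True j f" "\<forall>e. env_in K e \<longrightarrow> P e = sat K e f"
    using P unfolding definable_def by blast
  show ?thesis
    by (rule ind_induct[OF ind[OF f(1)] e _ base step a]) (use f(2) val e in \<open>simp add: env_in_upd\<close>)
qed

end

section \<open>Exponentiation and binary digits in models of \<open>I\<Delta>\<^sub>0 + exp\<close>\<close>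

locale idelta0_exp = pa_minus +
  fixes eps :: fm and vx vy :: nat
  assumes delta0_ind: "delta0 f \<Longrightarrow> ind K f x"
    and exp: "exp_ok K eps vx vy"
begin

lemma delta0_induct:
  assumes "delta0 F" "env_in K e" "\<And>a. a \<in> D \<Longrightarrow> sat K (e(x := a)) F = Q a"
    and "Q \<zero>" "\<And>a. a \<in> D \<Longrightarrow> Q a \<Longrightarrow> Q (a \<oplus> \<one>)" "a \<in> D"
  shows "Q a"
  using ind_induct[OF delta0_ind] assms by blast

abbreviation pow2 :: "'a \<Rightarrow> 'a \<Rightarrow> bool" where
  "pow2 a b \<equiv> Egraph K eps vx vy a b"

lemma exp_fm: "delta0 eps" "vx \<noteq> vy" "fv eps \<subseteq> {vx, vy}"
  using exp unfolding exp_ok_def by blast+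

lemma pow2_zero: "b \<in> D \<Longrightarrow> pow2 \<zero> b \<longleftrightarrow> b = \<one>"
  using exp unfolding exp_ok_def by blast

lemma pow2_Suc: "a \<in> D \<Longrightarrow> c \<in> D \<Longrightarrow> pow2 (a \<oplus> \<one>) c \<longleftrightarrow> (\<exists>b\<in>D. pow2 a b \<and> c = b \<oplus> b)"
  using exp unfolding exp_ok_def by blast

lemma pow2_total: "a \<in> D \<Longrightarrow> \<exists>b\<in>D. pow2 a b"
  using exp unfolding exp_ok_def by blast

text \<open>The graph formula with \<open>vx\<close> moved to \<open>i\<close>, then the new position of \<open>vy\<close> moved to \<open>j\<close>.\<close>

definition pow2_fm :: "nat \<Rightarrow> nat \<Rightarrow> fm" where
  "pow2_fm i j = rename (swap_var (swap_var vx i vy) j \<circ> swap_var vx i) eps"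

lemma delta0_pow2_fm [simp]: "delta0 (pow2_fm i j)"
  unfolding pow2_fm_def using exp_fm(1) by (simp add: delta0_rename)

lemma sat_pow2_fm [simp]: "i \<noteq> j \<Longrightarrow> sat K e (pow2_fm i j) = pow2 (e i) (e j)"
proof -
  assume ij: "i \<noteq> j"
  let ?s = "swap_var (swap_var vx i vy) j \<circ> swap_var vx i"
  have "inj ?s" using inj_swap_var inj_compose by blast
  moreover have "?s vx = i" and "?s vy = j" unfolding swap_var_def using exp_fm(2) ij by auto
  ultimately have "sat K e (pow2_fm i j) = sat K ((\<lambda>_. zer K)(vx := e i, vy := e j)) eps"
    unfolding pow2_fm_def sat_rename[OF \<open>inj ?s\<close>] by (intro sat_cong) (use exp_fm(2,3) in auto)
  then show ?thesis unfolding Egraph_def .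
qed

text \<open>The properties of \<open>2\<^sup>x\<close> below are proved by \<open>\<Delta>\<^sub>0\<close>-induction on \<open>x\<close>, with all other
  quantifiers bounded by a parameter \<open>B\<close> above the relevant values.\<close>

lemma pow2_unique:
  assumes D: "x \<in> D" "p \<in> D" "p' \<in> D" and E: "pow2 x p" "pow2 x p'"
  shows "p = p'"
proof -
  define B where "B = p \<oplus> p' \<oplus> \<one> \<oplus> \<one>"
  have B: "B \<in> D" "p \<prec> B" "p' \<prec> B" using less_sum3[of p p' "\<one>"] D unfolding B_def by auto
  let ?Q = "\<lambda>a. \<forall>u\<in>D. u \<prec> B \<longrightarrow> (\<forall>v\<in>D. v \<prec> B \<longrightarrow> pow2 a u \<and> pow2 a v \<longrightarrow> u = v)"
  have "?Q x"
  proof (rule delta0_induct[where F="BAll 2 (Var 1) (BAll 3 (Var 1) (Imp (Conj (pow2_fm 0 2) (pow2_fm 0 3)) (Eq (Var 2) (Var 3))))"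
        and e="(\<lambda>_. \<zero>)(1 := B)" and x=0 and Q="?Q"])
    show "?Q \<zero>" using pow2_zero by auto
  next
    fix a assume a: "a \<in> D" and Qa: "?Q a"
    show "?Q (a \<oplus> \<one>)"
    proof (intro ballI impI)
      fix u v assume u: "u \<in> D" "u \<prec> B" and v: "v \<in> D" "v \<prec> B" and uv: "pow2 (a \<oplus> \<one>) u \<and> pow2 (a \<oplus> \<one>) v"
      obtain b where b: "b \<in> D" "pow2 a b" "u = b \<oplus> b" using pow2_Suc[OF a u(1)] uv by blast
      obtain b' where b': "b' \<in> D" "pow2 a b'" "v = b' \<oplus> b'" using pow2_Suc[OF a v(1)] uv by blast
      have "b \<prec> B" by (rule le_less_trans[OF _ _ _ le_add[of b b]]) (use b u B in simp_all)
      moreover have "b' \<prec> B" by (rule le_less_trans[OF _ _ _ le_add[of b' b']]) (use b' v B in simp_all)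
      ultimately have "b = b'" using Qa b b' by blast
      then show "u = v" using b b' by simp
    qed
  qed (use D B in \<open>auto simp: env_in_def\<close>)
  then show ?thesis using D B E by blast
qed

lemma pow2_pos:
  assumes D: "x \<in> D" "p \<in> D" and E: "pow2 x p"
  shows "\<zero> \<prec> p"
proof -
  define B where "B = p \<oplus> \<one>"
  have B: "B \<in> D" "p \<prec> B" using D unfolding B_def by auto
  let ?Q = "\<lambda>a. \<forall>u\<in>D. u \<prec> B \<longrightarrow> pow2 a u \<longrightarrow> \<zero> \<prec> u"
  have "?Q x"
  proof (rule delta0_induct[where F="BAll 2 (Var 1) (Imp (pow2_fm 0 2) (Lt Zero (Var 2)))"
        and e="(\<lambda>_. \<zero>)(1 := B)" and x=0 and Q="?Q"])
    show "?Q \<zero>" using pow2_zero by auto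
  next
    fix a assume a: "a \<in> D" and Qa: "?Q a"
    show "?Q (a \<oplus> \<one>)"
    proof (intro ballI impI)
      fix u assume u: "u \<in> D" "u \<prec> B" "pow2 (a \<oplus> \<one>) u"
      obtain b where b: "b \<in> D" "pow2 a b" "u = b \<oplus> b" using pow2_Suc[OF a u(1)] u by blast
      have "b \<prec> B" by (rule le_less_trans[OF _ _ _ le_add[of b b]]) (use b u B in simp_all)
      then have "\<zero> \<prec> b" using Qa b by blast
      then show "\<zero> \<prec> u" using b le_add[of b b] by (metis less_le_trans zero_dom add_dom)
    qed
  qed (use D B in \<open>auto simp: env_in_def\<close>)
  then show ?thesis using D B E by blast
qed

lemma pow2_ge1: "x \<in> D \<Longrightarrow> p \<in> D \<Longrightarrow> pow2 x p \<Longrightarrow> \<one> \<preceq> p"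
  using pow2_pos pos_ge1 by blast

lemma division:
  assumes D: "c \<in> D" "p \<in> D" and p: "\<zero> \<prec> p"
  obtains q r where "q \<in> D" "r \<in> D" "c = q \<otimes> p \<oplus> r" "r \<prec> p"
proof -
  let ?Q = "\<lambda>c. \<exists>q\<in>D. q \<prec> c \<oplus> \<one> \<and> (\<exists>r\<in>D. r \<prec> p \<and> c = q \<otimes> p \<oplus> r)"
  have "?Q c"
  proof (rule delta0_induct[where F="BEx 2 (Plus (Var 0) One) (BEx 3 (Var 1) (Eq (Var 0) (Plus (Times (Var 2) (Var 1)) (Var 3))))"
        and e="(\<lambda>_. \<zero>)(1 := p)" and x=0 and Q="?Q"])
    show "?Q \<zero>" using p D by (intro bexI[of _ "\<zero>"]) auto
  next
    fix a assume a: "a \<in> D" and "?Q a"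
    then obtain q r where qr: "q \<in> D" "r \<in> D" "q \<prec> a \<oplus> \<one>" "r \<prec> p" "a = q \<otimes> p \<oplus> r" by blast
    have qa: "q \<prec> a \<oplus> \<one> \<oplus> \<one>" using qr a by (meson add_dom one_dom less_add1 trans)
    have "r \<oplus> \<one> \<preceq> p" using less_succ_le qr D by blast
    then show "?Q (a \<oplus> \<one>)"
    proof
      assume "r \<oplus> \<one> \<prec> p"
      moreover have "a \<oplus> \<one> = q \<otimes> p \<oplus> (r \<oplus> \<one>)" using qr D by (simp add: add_assoc)
      ultimately show ?thesis using qa qr by (intro bexI[of _ q]) auto
    next
      assume rp: "r \<oplus> \<one> = p"
      have "a \<oplus> \<one> = (q \<oplus> \<one>) \<otimes> p \<oplus> \<zero>" using qr D rp by (simp add: add_assoc distrib_right)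
      moreover have "q \<oplus> \<one> \<prec> a \<oplus> \<one> \<oplus> \<one>" using qr a add_less_cancel_r by simp
      ultimately show ?thesis using qr p by (intro bexI[of _ "q \<oplus> \<one>"]) auto
    qed
  qed (use D in \<open>auto simp: env_in_def\<close>)
  with that show ?thesis by blast
qed

lemma even_or_odd:
  assumes D: "x \<in> D"
  shows "is_even x \<or> is_odd x"
proof -
  let ?Q = "\<lambda>x. \<exists>s\<in>D. s \<prec> x \<oplus> \<one> \<and> (x = s \<oplus> s \<or> x = s \<oplus> s \<oplus> \<one>)"
  have "?Q x"
  proof (rule delta0_induct[where F="BEx 1 (Plus (Var 0) One) (Disj (Eq (Var 0) (Plus (Var 1) (Var 1))) (Eq (Var 0) (Plus (Plus (Var 1) (Var 1)) One)))"
        and e="\<lambda>_. \<zero>" and x=0 and Q="?Q"])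
    show "?Q \<zero>" by (intro bexI[of _ "\<zero>"]) auto
  next
    fix a assume a: "a \<in> D" and "?Q a"
    then obtain s where s: "s \<in> D" "s \<prec> a \<oplus> \<one>" "a = s \<oplus> s \<or> a = s \<oplus> s \<oplus> \<one>" by blast
    have sa: "s \<prec> a \<oplus> \<one> \<oplus> \<one>" using s a by (meson add_dom one_dom less_add1 trans)
    show "?Q (a \<oplus> \<one>)"
    proof (cases "a = s \<oplus> s")
      case True
      then show ?thesis using s sa by (intro bexI[of _ s]) auto
    next
      case False
      then have "a \<oplus> \<one> = (s \<oplus> \<one>) \<oplus> (s \<oplus> \<one>)" using s by (simp add: ac)
      moreover have "s \<oplus> \<one> \<prec> a \<oplus> \<one> \<oplus> \<one>" using s a add_less_cancel_r by simp
      ultimately show ?thesis using s by (intro bexI[of _ "s \<oplus> \<one>"]) auto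
    qed
  qed (use D in \<open>auto simp: env_in_def\<close>)
  then show ?thesis unfolding is_even_def is_odd_def by blast
qed

lemma odd_add_even_iff:
  assumes "x \<in> D" "y \<in> D" "is_even y"
  shows "is_odd (x \<oplus> y) \<longleftrightarrow> is_odd x"
  using assms odd_add_even even_add even_or_odd not_even_odd by (metis add_dom)

lemma pow2_add:
  assumes D: "x \<in> D" "y \<in> D" "p \<in> D" "q \<in> D" "r \<in> D" and E: "pow2 x p" "pow2 y q" "pow2 (x \<oplus> y) r"
  shows "r = p \<otimes> q"
proof -
  define B where "B = q \<oplus> r \<oplus> (x \<oplus> y) \<oplus> \<one>"
  have B: "B \<in> D" "q \<prec> B" "r \<prec> B" "x \<oplus> y \<prec> B" using less_sum3[of q r "x \<oplus> y"] D unfolding B_def by auto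
  let ?Q = "\<lambda>a. \<forall>u\<in>D. u \<prec> B \<longrightarrow> (\<forall>v\<in>D. v \<prec> B \<longrightarrow> (\<forall>s\<in>D. s \<prec> B \<longrightarrow> s = x \<oplus> a \<longrightarrow> pow2 a u \<longrightarrow> pow2 s v \<longrightarrow> v = p \<otimes> u))"
  have "?Q y"
  proof (rule delta0_induct[where F="BAll 2 (Var 1) (BAll 3 (Var 1) (BAll 6 (Var 1) (Imp (Eq (Var 6) (Plus (Var 4) (Var 0)))
      (Imp (pow2_fm 0 2) (Imp (pow2_fm 6 3) (Eq (Var 3) (Times (Var 5) (Var 2))))))))"
      and e="(\<lambda>_. \<zero>)(1 := B, 4 := x, 5 := p)" and x=0 and Q="?Q"])
    show "?Q \<zero>"
    proof (intro ballI impI)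
      fix u v s assume "u \<in> D" "v \<in> D" "s \<in> D" "s = x \<oplus> \<zero>" "pow2 \<zero> u" "pow2 s v"
      then have "u = \<one>" and "v = p" using pow2_zero pow2_unique[of x v p] D E by auto
      then show "v = p \<otimes> u" using D by simp
    qed
  next
    fix a assume a: "a \<in> D" and Qa: "?Q a"
    show "?Q (a \<oplus> \<one>)"
    proof (intro ballI impI)
      fix u v s assume u: "u \<in> D" "u \<prec> B" and v: "v \<in> D" "v \<prec> B"
        and s: "s \<in> D" "s \<prec> B" "s = x \<oplus> (a \<oplus> \<one>)" "pow2 (a \<oplus> \<one>) u" "pow2 s v"
      obtain b where b: "b \<in> D" "pow2 a b" "u = b \<oplus> b" using pow2_Suc[OF a u(1)] s by blast
      have s': "s = x \<oplus> a \<oplus> \<one>" using s a D by (simp add: add_assoc)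
      obtain c where c: "c \<in> D" "pow2 (x \<oplus> a) c" "v = c \<oplus> c" using pow2_Suc[of "x \<oplus> a" v] s s' a D v by auto
      have "b \<prec> B" by (rule le_less_trans[OF _ _ _ le_add[of b b]]) (use b u B in simp_all)
      moreover have "c \<prec> B" by (rule le_less_trans[OF _ _ _ le_add[of c c]]) (use c v B in simp_all)
      moreover have "x \<oplus> a \<prec> B" by (rule trans[OF _ _ _ less_add1[of "x \<oplus> a"]]) (use s' s a D B in simp_all)
      ultimately have "c = p \<otimes> b" using Qa b c a D by simp
      then show "v = p \<otimes> u" using b c D by (simp add: distrib_left)
    qed
  qed (use D B in \<open>auto simp: env_in_def\<close>)
  then show ?thesis using D B E by simp
qed

lemma pow2_less_split:
  assumes D: "u \<in> D" "v \<in> D" "p \<in> D" "t \<in> D" and uv: "u \<prec> v" and E: "pow2 u p" "pow2 v t"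
  obtains P where "P \<in> D" "is_even P" "t = p \<otimes> P"
proof -
  obtain k where k: "k \<in> D" "u \<oplus> k = v" using less_imp_add uv D by blast
  have "k \<noteq> \<zero>" using k uv D by auto
  then obtain k' where k': "k' \<in> D" "k = k' \<oplus> \<one>" using eq_Suc_pred k by blast
  obtain P where P: "P \<in> D" "pow2 k P" using pow2_total k by blast
  obtain b where b: "b \<in> D" "pow2 k' b" "P = b \<oplus> b" using pow2_Suc[of k' P] P k' by auto
  have "t = p \<otimes> P" using pow2_add[of u k p P t] D k P E by simp
  moreover have "is_even P" unfolding is_even_def using b by blast
  ultimately show ?thesis using P that by blast
qed

abbreviation bit :: "'a \<Rightarrow> 'a \<Rightarrow> bool" where
  "bit u c \<equiv> bit_in K eps vx vy u c"

lemma bit_iff_odd_quotient: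
  assumes D: "u \<in> D" "c \<in> D" "p \<in> D" "q \<in> D" "r \<in> D" and E: "pow2 u p" and c: "c = q \<otimes> p \<oplus> r" "r \<prec> p"
  shows "bit u c \<longleftrightarrow> is_odd q"
proof
  assume "bit u c"
  then obtain p' q' r' where w: "p' \<in> D" "pow2 u p'" "q' \<in> D" "r' \<in> D" "c = q' \<otimes> p' \<oplus> r'" "r' \<prec> p'" "is_odd q'"
    unfolding bit_in_def is_odd_def by blast
  have "p' = p" using pow2_unique[of u p' p] w D E by simp
  then have "q' = q" using div_unique[of q' r' q r p] w D c by simp
  then show "is_odd q" using w by simp
next
  assume "is_odd q"
  then show "bit u c" unfolding bit_in_def is_odd_def using D E c by blast
qed

lemma not_bit_zero:
  assumes "u \<in> D"
  shows "\<not> bit u \<zero>"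
proof -
  obtain p where p: "p \<in> D" "pow2 u p" using pow2_total assms by blast
  then have "bit u \<zero> \<longleftrightarrow> is_odd \<zero>"
    using bit_iff_odd_quotient[of u "\<zero>" p "\<zero>" "\<zero>"] pow2_pos assms by simp
  moreover have "is_even \<zero>" unfolding is_even_def by (intro bexI[of _ "\<zero>"]) auto
  ultimately show ?thesis using not_even_odd zero_dom by blast
qed

lemma bit_witnesses_le:
  assumes D: "u \<in> D" "c \<in> D" and b: "bit u c"
  shows "\<exists>p\<in>D. p \<preceq> c \<and> pow2 u p \<and> (\<exists>q\<in>D. q \<preceq> c \<and> (\<exists>r\<in>D. r \<preceq> c \<and> c = q \<otimes> p \<oplus> r \<and> r \<prec> p
    \<and> (\<exists>s\<in>D. s \<preceq> c \<and> q = s \<oplus> s \<oplus> \<one>)))"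
proof -
  obtain p q r s where w: "p \<in> D" "pow2 u p" "q \<in> D" "r \<in> D" "c = q \<otimes> p \<oplus> r" "r \<prec> p" "s \<in> D" "q = s \<oplus> s \<oplus> \<one>"
    using b unfolding bit_in_def by blast
  have p1: "\<one> \<preceq> p" using pow2_ge1 D w by blast
  have q1: "\<one> \<preceq> q" using le_add2[of "\<one>" "s \<oplus> s"] w by simp
  have cq: "q \<otimes> p \<preceq> c" using le_add[of "q \<otimes> p" r] w by simp
  have "\<one> \<otimes> p \<preceq> q \<otimes> p" using mul_le_mono_r[of "\<one>" q p] q1 w by simp
  then have pc: "p \<preceq> c" using cq w le_trans[of p "q \<otimes> p" c] D by simp
  have qc: "q \<preceq> c" using le_mul[of q p] p1 cq w le_trans[of q "q \<otimes> p" c] D by simp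
  have rc: "r \<preceq> c" using le_add2[of r "q \<otimes> p"] w by simp
  have "s \<preceq> q" using w le_add[of s s] le_add[of "s \<oplus> s" "\<one>"] le_trans[of s "s \<oplus> s" "s \<oplus> s \<oplus> \<one>"] by simp
  then have sc: "s \<preceq> c" using qc le_trans[of s q c] w D by simp
  show ?thesis using w pc qc rc sc by blast
qed

text \<open>All witnesses in the definition of \<open>u \<in> c\<close> are at most \<open>c\<close>, so it is \<open>\<Delta>\<^sub>0\<close>.\<close>

lemma definable_bit:
  assumes ij: "i \<noteq> j"
  shows "definable K b k (\<lambda>e. bit (e i) (e j))"
proof -
  define P Q R S where "P = i + j + 1" and "Q = i + j + 2" and "R = i + j + 3" and "S = i + j + 4"
  let ?F = "BEx P (Plus (Var j) One) (Conj (pow2_fm i P) (BEx Q (Plus (Var j) One) (BEx R (Plus (Var j) One)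
     (Conj (Eq (Var j) (Plus (Times (Var Q) (Var P)) (Var R))) (Conj (Lt (Var R) (Var P))
       (BEx S (Plus (Var j) One) (Eq (Var Q) (Plus (Plus (Var S) (Var S)) One))))))))"
  have "definable K True 0 (\<lambda>e. bit (e i) (e j))"
  proof (rule definable_cong[OF definable_sat[of True 0 ?F]])
    fix e assume e: "env_in K e"
    then have De: "e i \<in> D" "e j \<in> D" unfolding env_in_def by auto
    have "sat K e ?F = (\<exists>p\<in>D. p \<prec> e j \<oplus> \<one> \<and> pow2 (e i) p \<and> (\<exists>q\<in>D. q \<prec> e j \<oplus> \<one> \<and> (\<exists>r\<in>D. r \<prec> e j \<oplus> \<one> \<and>
        e j = q \<otimes> p \<oplus> r \<and> r \<prec> p \<and> (\<exists>s\<in>D. s \<prec> e j \<oplus> \<one> \<and> q = s \<oplus> s \<oplus> \<one>))))"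
      using ij unfolding P_def Q_def R_def S_def by simp
    also have "\<dots> = bit (e i) (e j)"
      using bit_witnesses_le[OF De] le_less_Suc De unfolding bit_in_def by blast
    finally show "sat K e ?F = bit (e i) (e j)" .
  qed simp
  then show ?thesis by (rule definable_0)
qed

lemma bit_add_even_multiple:
  assumes D: "v \<in> D" "d \<in> D" "t \<in> D" "P \<in> D" and E: "pow2 v t" and P: "is_even P"
  shows "bit v (d \<oplus> P \<otimes> t) \<longleftrightarrow> bit v d"
proof -
  obtain q r where qr: "q \<in> D" "r \<in> D" "d = q \<otimes> t \<oplus> r" "r \<prec> t"
    using division[OF D(2,3) pow2_pos[OF D(1,3) E]] by blast
  have "d \<oplus> P \<otimes> t = (q \<oplus> P) \<otimes> t \<oplus> r" using qr D by (simp add: ac)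
  then have "bit v (d \<oplus> P \<otimes> t) \<longleftrightarrow> is_odd (q \<oplus> P)"
    using bit_iff_odd_quotient[of v _ t "q \<oplus> P" r] qr D E by simp
  also have "\<dots> \<longleftrightarrow> is_odd q" using odd_add_even_iff qr D P by blast
  also have "\<dots> \<longleftrightarrow> bit v d" using bit_iff_odd_quotient[OF D(1,2,3) qr(1,2) E qr(3,4)] by simp
  finally show ?thesis .
qed

lemma even_quotient_add_less:
  assumes D: "q \<in> D" "p \<in> D" "r \<in> D" "P \<in> D" and r: "r \<prec> p" and lt: "q \<otimes> p \<oplus> r \<prec> P \<otimes> p"
    and ev: "is_even q" "is_even P"
  shows "q \<otimes> p \<oplus> r \<oplus> p \<prec> P \<otimes> p"
proof -
  have "q \<otimes> p \<prec> P \<otimes> p" by (rule le_less_trans[OF _ _ _ le_add lt]) (use D in simp_all)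
  then have "q \<prec> P" using mul_less_cancel_r D by blast
  then have "q \<oplus> \<one> \<prec> P" using even_less D ev by blast
  then have "q \<oplus> \<one> \<oplus> \<one> \<preceq> P" using less_succ_le D by simp
  then have 1: "(q \<oplus> \<one> \<oplus> \<one>) \<otimes> p \<preceq> P \<otimes> p" using mul_le_mono_r[of "q \<oplus> \<one> \<oplus> \<one>" P p] D by simp
  have "q \<otimes> p \<oplus> r \<prec> q \<otimes> p \<oplus> p" using add_less_cancel_l[of r p "q \<otimes> p"] D r by simp
  then have "q \<otimes> p \<oplus> r \<oplus> p \<prec> q \<otimes> p \<oplus> p \<oplus> p" using add_less_cancel_r[of "q \<otimes> p \<oplus> r" "q \<otimes> p \<oplus> p" p] D by simp
  also have "q \<otimes> p \<oplus> p \<oplus> p = (q \<oplus> \<one> \<oplus> \<one>) \<otimes> p" using D by (simp add: distrib_right)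
  finally have 2: "q \<otimes> p \<oplus> r \<oplus> p \<prec> (q \<oplus> \<one> \<oplus> \<one>) \<otimes> p" .
  show ?thesis by (rule less_le_trans[OF _ _ _ 2 1]) (use D in simp_all)
qed

lemma add_pow2_less:
  assumes D: "u \<in> D" "d \<in> D" "p \<in> D" "a \<in> D" "A \<in> D" and Eu: "pow2 u p" and Ea: "pow2 a A"
    and nb: "\<not> bit u d" and ua: "u \<prec> a" and dA: "d \<prec> A"
  shows "d \<oplus> p \<prec> A"
proof -
  obtain q r where qr: "q \<in> D" "r \<in> D" "d = q \<otimes> p \<oplus> r" "r \<prec> p"
    using division[OF D(2,3) pow2_pos[OF D(1,3) Eu]] by blast
  have "is_even q" using bit_iff_odd_quotient[OF D(1,2,3) qr(1,2) Eu qr(3,4)] nb even_or_odd qr by blast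
  moreover obtain P where P: "P \<in> D" "is_even P" "A = p \<otimes> P" using pow2_less_split[OF D(1,4,3,5) ua Eu Ea] by blast
  moreover have "q \<otimes> p \<oplus> r \<prec> P \<otimes> p" using dA qr P D mul_comm by simp
  ultimately have "q \<otimes> p \<oplus> r \<oplus> p \<prec> P \<otimes> p" using even_quotient_add_less[OF qr(1) D(3) qr(2) P(1) qr(4)] by blast
  then show ?thesis using qr P D mul_comm by simp
qed

lemma bit_add_pow2_self:
  assumes D: "u \<in> D" "d \<in> D" "p \<in> D" and E: "pow2 u p" and nb: "\<not> bit u d"
  shows "bit u (d \<oplus> p)"
proof -
  obtain q r where qr: "q \<in> D" "r \<in> D" "d = q \<otimes> p \<oplus> r" "r \<prec> p"
    using division[OF D(2,3) pow2_pos[OF D(1,3) E]] by blast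
  have "is_even q" using bit_iff_odd_quotient[OF D qr(1,2) E qr(3,4)] nb even_or_odd qr by blast
  moreover have "d \<oplus> p = (q \<oplus> \<one>) \<otimes> p \<oplus> r" using qr D by (simp add: ac)
  ultimately show ?thesis using bit_iff_odd_quotient[of u "d \<oplus> p" p "q \<oplus> \<one>" r] qr D E even_Suc by simp
qed

lemma bit_add_pow2:
  assumes D: "u \<in> D" "d \<in> D" "p \<in> D" "v \<in> D" and E: "pow2 u p" and nb: "\<not> bit u d"
  shows "bit v (d \<oplus> p) \<longleftrightarrow> bit v d \<or> v = u"
proof -
  obtain t where t: "t \<in> D" "pow2 v t" using pow2_total D(4) by blast
  consider "v = u" | "v \<prec> u" | "u \<prec> v" using less_trichotomy D by blast
  then show ?thesis
  proof cases
    case 1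
    then show ?thesis using bit_add_pow2_self[OF D(1-3) E nb] by simp
  next
    case 2
    obtain P where P: "P \<in> D" "is_even P" "p = t \<otimes> P" using pow2_less_split[OF D(4,1) t(1) D(3) 2 t(2) E] by blast
    then have "bit v (d \<oplus> p) \<longleftrightarrow> bit v d"
      using bit_add_even_multiple[OF D(4,2) t(1) P(1) t(2) P(2)] t mul_comm by simp
    then show ?thesis using 2 D by auto
  next
    case 3
    obtain P where P: "P \<in> D" "is_even P" "t = p \<otimes> P" using pow2_less_split[OF D(1,4,3) t(1) 3 E t(2)] by blast
    obtain Q R where QR: "Q \<in> D" "R \<in> D" "d = Q \<otimes> t \<oplus> R" "R \<prec> t"
      using division[OF D(2) t(1) pow2_pos[OF D(4) t]] by blast
    have "d = R \<oplus> (Q \<otimes> P) \<otimes> p" using QR P D by (simp add: ac)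
    then have "bit u d \<longleftrightarrow> bit u R"
      using bit_add_even_multiple[OF D(1) QR(2) D(3) _ E, of "Q \<otimes> P"] even_mul QR P by simp
    then have "R \<oplus> p \<prec> t" using add_pow2_less[OF D(1) QR(2) D(3,4) t(1) E t(2) _ 3 QR(4)] nb by blast
    moreover have "d \<oplus> p = Q \<otimes> t \<oplus> (R \<oplus> p)" using QR D t by (simp add: add_assoc)
    ultimately have "bit v (d \<oplus> p) \<longleftrightarrow> bit v d"
      using bit_iff_odd_quotient[of v _ t Q] D t QR by simp
    then show ?thesis using 3 D by auto
  qed
qed

end

section \<open>Bounded quantification over definable predicates\<close>

definition bex_below :: "'a struc \<Rightarrow> nat \<Rightarrow> nat \<Rightarrow> ((nat \<Rightarrow> 'a) \<Rightarrow> bool) \<Rightarrow> (nat \<Rightarrow> 'a) \<Rightarrow> bool" where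
  "bex_below K u w P = (\<lambda>e. \<exists>a\<in>dom K. lt K a (e w) \<and> P (e(u := a)))"

definition ball_below :: "'a struc \<Rightarrow> nat \<Rightarrow> nat \<Rightarrow> ((nat \<Rightarrow> 'a) \<Rightarrow> bool) \<Rightarrow> (nat \<Rightarrow> 'a) \<Rightarrow> bool" where
  "ball_below K u w P = (\<lambda>e. \<forall>a\<in>dom K. lt K a (e w) \<longrightarrow> P (e(u := a)))"

definition bounded_quantifier_closed :: "'a struc \<Rightarrow> nat \<Rightarrow> bool" where
  "bounded_quantifier_closed K j \<longleftrightarrow> (\<forall>b P u w. u \<noteq> w \<longrightarrow> definable K b j P
     \<longrightarrow> definable K b j (bex_below K u w P) \<and> definable K b j (ball_below K u w P))"

lemma not_bex_below: "(\<not> bex_below K u w P e) = ball_below K u w (\<lambda>e. \<not> P e) e"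
  unfolding bex_below_def ball_below_def by blast

lemma not_ball_below: "(\<not> ball_below K u w P e) = bex_below K u w (\<lambda>e. \<not> P e) e"
  unfolding bex_below_def ball_below_def by blast

lemma definable0_bex_below: "definable K b 0 P \<Longrightarrow> definable K b 0 (bex_below K u w P)"
  using definable0_bex[of K b P "Var w" u] unfolding bex_below_def by simp

lemma definable0_ball_below: "definable K b 0 P \<Longrightarrow> definable K b 0 (ball_below K u w P)"
  using definable0_ball[of K b P "Var w" u] unfolding ball_below_def by simp

lemma definable_Sigma_bex_below:
  assumes nonempty: "dom K \<noteq> {}" and uw: "u \<noteq> w" and P: "definable K True j P"
  shows "definable K True j (bex_below K u w P)"
proof (cases j)
  case 0
  with P show ?thesis by (simp add: definable0_bex_below)
next
  case (Suc i)
  have "definable K True j (\<lambda>e. lt K (e u) (e w) \<and> P e)"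
    using definable_conj[OF nonempty definable_lt[of K True j "Var u" "Var w"] P] by simp
  then have "definable K True (Suc i) (\<lambda>e. \<exists>a\<in>dom K. lt K ((e(u := a)) u) ((e(u := a)) w) \<and> P (e(u := a)))"
    unfolding Suc by (rule definable_ex)
  with uw Suc show ?thesis unfolding bex_below_def by simp
qed

lemma definable_Pi_ball_below:
  assumes nonempty: "dom K \<noteq> {}" and uw: "u \<noteq> w" and P: "definable K False j P"
  shows "definable K False j (ball_below K u w P)"
proof -
  have "definable K True j (bex_below K u w (\<lambda>e. \<not> P e))"
    using definable_Sigma_bex_below[OF nonempty uw] definable_neg[OF P] by simp
  then have "definable K False j (\<lambda>e. \<not> bex_below K u w (\<lambda>e. \<not> P e) e)"
    using definable_neg by fastforce
  then show ?thesis by (rule definable_cong) (simp add: not_bex_below)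
qed

lemma ex_ex_eq_ex_bounded:
  assumes bound: "\<And>a c. a \<in> dom K \<Longrightarrow> c \<in> dom K \<Longrightarrow> \<exists>b\<in>dom K. lt K a b \<and> lt K c b"
    and R: "supported K R S" and y: "y \<notin> S \<union> {v, y0}" and e: "env_in K e"
  shows "(\<exists>a\<in>dom K. \<exists>c\<in>dom K. R (e(v := a, y0 := c)))
    = (\<exists>b\<in>dom K. bex_below K v y (bex_below K y0 y R) (e(y := b)))"
proof -
  have R_upd: "R (e(y := b, v := a, y0 := c)) = R (e(v := a, y0 := c))"
    if "a \<in> dom K" "b \<in> dom K" "c \<in> dom K" for a b c
    by (rule supported_eq[OF R]) (use that e y in \<open>auto intro!: env_in_upd\<close>)
  show ?thesis
  proof
    assume "\<exists>a\<in>dom K. \<exists>c\<in>dom K. R (e(v := a, y0 := c))"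
    then obtain a c where ac: "a \<in> dom K" "c \<in> dom K" "R (e(v := a, y0 := c))" by blast
    moreover obtain b where b: "b \<in> dom K" "lt K a b" "lt K c b" using bound ac by blast
    ultimately have "bex_below K v y (bex_below K y0 y R) (e(y := b))"
      unfolding bex_below_def using y R_upd by auto
    with b show "\<exists>b\<in>dom K. bex_below K v y (bex_below K y0 y R) (e(y := b))" by blast
  next
    assume "\<exists>b\<in>dom K. bex_below K v y (bex_below K y0 y R) (e(y := b))"
    then show "\<exists>a\<in>dom K. \<exists>c\<in>dom K. R (e(v := a, y0 := c))"
      unfolding bex_below_def using y R_upd by auto
  qed
qed

lemma foldr_Ex_single_ex:
  assumes nonempty: "dom K \<noteq> {}"
    and bex: "\<And>P u w. u \<noteq> w \<Longrightarrow> definable K False i P \<Longrightarrow> definable K False i (bex_below K u w P)"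
    and bound: "\<And>a c. a \<in> dom K \<Longrightarrow> c \<in> dom K \<Longrightarrow> \<exists>b\<in>dom K. lt K a b \<and> lt K c b"
    and g: "hier False i g"
  shows "finite F \<Longrightarrow> \<exists>y R. y \<notin> F \<and> definable K False i R
    \<and> (\<forall>e. env_in K e \<longrightarrow> sat K e (foldr Ex vs g) = (\<exists>a\<in>dom K. R (e(y := a))))"
proof (induction vs arbitrary: F)
  case Nil
  obtain y where y: "y \<notin> F \<union> fv g" using fresh_var[of "F \<union> fv g"] Nil finite_fv by auto
  have "sat K (e(y := a)) g = sat K e g" for e a
    by (rule sat_cong) (use y in auto)
  then have "\<forall>e. env_in K e \<longrightarrow> sat K e (foldr Ex [] g) = (\<exists>a\<in>dom K. sat K (e(y := a)) g)"
    using nonempty by auto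
  with y definable_sat[OF g] show ?case by blast
next
  case (Cons v vs)
  have "finite (F \<union> {v})" using Cons.prems by simp
  from Cons.IH[OF this] obtain y0 R0 where R0: "y0 \<notin> F \<union> {v}" "definable K False i R0"
    "\<forall>e. env_in K e \<longrightarrow> sat K e (foldr Ex vs g) = (\<exists>a\<in>dom K. R0 (e(y0 := a)))"
    by blast
  obtain S0 where S0: "supported K R0 S0" using definable_supported[OF R0(2)] by blast
  obtain y where y: "y \<notin> F \<union> {v, y0} \<union> S0"
    using fresh_var[of "F \<union> {v, y0} \<union> S0"] Cons.prems supported_finite[OF S0] by auto
  let ?R = "bex_below K v y (bex_below K y0 y R0)"
  have "definable K False i ?R"
    using bex[OF _ bex[OF _ R0(2)], of v y y0 y] y by auto
  moreover have "sat K e (foldr Ex (v # vs) g) = (\<exists>b\<in>dom K. ?R (e(y := b)))" if e: "env_in K e" for e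
  proof -
    have "sat K e (foldr Ex (v # vs) g) = (\<exists>a\<in>dom K. \<exists>c\<in>dom K. R0 (e(v := a, y0 := c)))"
      using R0(3) e by (simp add: env_in_upd)
    also have "\<dots> = (\<exists>b\<in>dom K. ?R (e(y := b)))"
      by (rule ex_ex_eq_ex_bounded[OF bound S0 _ e]) (use y in auto)
    finally show ?thesis .
  qed
  moreover have "y \<notin> F" using y by blast
  ultimately show ?case by blast
qed

lemma Sigma_Suc_single_ex:
  assumes nonempty: "dom K \<noteq> {}"
    and bex: "\<And>P u w. u \<noteq> w \<Longrightarrow> definable K False i P \<Longrightarrow> definable K False i (bex_below K u w P)"
    and bound: "\<And>a c. a \<in> dom K \<Longrightarrow> c \<in> dom K \<Longrightarrow> \<exists>b\<in>dom K. lt K a b \<and> lt K c b"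
    and P: "definable K True (Suc i) P" and F: "finite F"
  obtains y R where "y \<notin> F" "definable K False i R" "\<forall>e. env_in K e \<longrightarrow> P e = (\<exists>a\<in>dom K. R (e(y := a)))"
proof -
  obtain f where f: "hier True (Suc i) f" "\<forall>e. env_in K e \<longrightarrow> P e = sat K e f"
    using P unfolding definable_def by blast
  then obtain vs g where "f = foldr Ex vs g" "hier False i g" by auto
  moreover obtain y R where "y \<notin> F" "definable K False i R"
    "\<forall>e. env_in K e \<longrightarrow> sat K e (foldr Ex vs g) = (\<exists>a\<in>dom K. R (e(y := a)))"
    using foldr_Ex_single_ex[OF nonempty bex bound \<open>hier False i g\<close> F] by blast
  ultimately show ?thesis using f(2) that by auto
qed

locale isigma_exp = idelta0_exp +
  fixes n :: nat
  assumes sigma_ind: "Sigma n f \<Longrightarrow> ind K f x"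
begin

lemma sigma_induct:
  assumes "definable K True j P" "j \<le> n" "env_in K e" "\<And>a. a \<in> D \<Longrightarrow> P (e(x := a)) = Q a"
    and "Q \<zero>" "\<And>a. a \<in> D \<Longrightarrow> Q a \<Longrightarrow> Q (a \<oplus> \<one>)" "a \<in> D"
  shows "Q a"
  by (rule definable_induct[OF _ assms(1,3-)]) (use sigma_ind hier_mono assms(2) in blast)

text \<open>By \<open>\<Sigma>\<^sub>i\<^sub>+\<^sub>1\<close>-induction on \<open>t\<close> for \<open>\<exists>b. \<forall>a < t. \<exists>c < b. R a c\<close>, which is
  \<open>\<Sigma>\<^sub>i\<^sub>+\<^sub>1\<close> because \<open>\<Pi>\<^sub>i\<close> is closed under bounded quantifiers.\<close>

lemma bounded_collection:
  assumes j: "Suc i \<le> n" and bq: "bounded_quantifier_closed K i" and R: "definable K False i R" and d: "u \<noteq> y" "u \<noteq> w" "y \<noteq> w"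
    and e: "env_in K e" and h: "\<forall>a\<in>D. a \<prec> e w \<longrightarrow> (\<exists>c\<in>D. R (e(u:=a, y:=c)))"
  shows "\<exists>b\<in>D. \<forall>a\<in>D. a \<prec> e w \<longrightarrow> (\<exists>c\<in>D. c \<prec> b \<and> R (e(u:=a, y:=c)))"
proof -
  obtain S where S: "supported K R S" using definable_supported[OF R] by blast
  obtain z where z: "z \<notin> S \<union> {u, y, w}" using fresh_var[of "S \<union> {u, y, w}"] supported_finite[OF S] by auto
  obtain z' where z': "z' \<notin> S \<union> {u, y, w, z}" using fresh_var[of "S \<union> {u, y, w, z}"] supported_finite[OF S] by auto
  let ?I = "ball_below K u z (bex_below K y z' R)"
  have I1: "definable K False i (bex_below K y z' R)" using bq R z' unfolding bounded_quantifier_closed_def by auto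
  have I: "definable K False i ?I" using bq I1 z unfolding bounded_quantifier_closed_def by auto
  let ?Psi = "\<lambda>e'. \<not> (e' z \<prec> e' w \<or> e' z = e' w) \<or> (\<exists>b\<in>D. ?I (e'(z':=b)))"
  have c1: "definable K True (Suc i) (\<lambda>e'. \<not> (e' z \<prec> e' w \<or> e' z = e' w))"
    using definable_neg[OF definable_le[of K False "Suc i" z w]] by simp
  have c2: "definable K True (Suc i) (\<lambda>e'. \<exists>b\<in>D. ?I (e'(z':=b)))"
    by (rule definable_ex[OF definable_Suc_dual]) (use I in simp)
  have clPsi: "definable K True (Suc i) ?Psi" by (rule definable_disj[OF dom_nonempty c1 c2])
  have Req: "R (e(z:=t, z':=b, u:=a, y:=c)) = R (e(u:=a, y:=c))" if "t \<in> D" "b \<in> D" "a \<in> D" "c \<in> D" for t b a c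
    by (rule supported_eq[OF S]) (use that e z z' in \<open>auto intro!: env_in_upd\<close>)
  let ?Q = "\<lambda>t. \<not> (t \<prec> e w \<or> t = e w) \<or> (\<exists>b\<in>D. \<forall>a\<in>D. a \<prec> t \<longrightarrow> (\<exists>c\<in>D. c \<prec> b \<and> R (e(u:=a, y:=c))))"
  have ew: "e w \<in> D" using e unfolding env_in_def by auto
  have "?Q (e w)"
  proof (rule sigma_induct[where P="?Psi" and e=e and x=z and j="Suc i" and Q="?Q"])
    show "definable K True (Suc i) ?Psi" by (rule clPsi)
  next
    fix t assume t: "t \<in> D"
    show "?Psi (e(z:=t)) = ?Q t"
      unfolding ball_below_def bex_below_def using z z' Req t by (simp cong: conj_cong)
  next
    show "?Q \<zero>" by (rule disjI2, rule bexI[of _ "\<zero>"]) auto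
  next
    fix t assume t: "t \<in> D" and Qt: "?Q t"
    show "?Q (t \<oplus> \<one>)"
    proof (cases "t \<oplus> \<one> \<prec> e w \<or> t \<oplus> \<one> = e w")
      case False then show ?thesis by blast
    next
      case True
      have tw: "t \<prec> e w" by (rule less_le_trans[OF _ _ _ less_add1[OF t] True]) (use t ew in simp_all)
      then obtain b where b: "b \<in> D" "\<forall>a\<in>D. a \<prec> t \<longrightarrow> (\<exists>c\<in>D. c \<prec> b \<and> R (e(u:=a, y:=c)))" using Qt by blast
      obtain c0 where c0: "c0 \<in> D" "R (e(u:=t, y:=c0))" using h tw t by blast
      show ?thesis
        using bounded_witnesses_Suc[OF t b(1) c0(1), of "\<lambda>a c. R (e(u:=a, y:=c))"] b(2) c0(2) by blast
    qed
  qed (use j e ew in auto)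
  then show ?thesis using irrefl ew by blast
qed

lemma definable_Sigma_ball_below:
  assumes j: "Suc i \<le> n" and bq: "bounded_quantifier_closed K i" and uw: "u \<noteq> w" and P: "definable K True (Suc i) P"
  shows "definable K True (Suc i) (ball_below K u w P)"
proof -
  have bqP: "\<And>P u w. u \<noteq> w \<Longrightarrow> definable K False i P \<Longrightarrow> definable K False i (bex_below K u w P)"
    using bq unfolding bounded_quantifier_closed_def by blast
  have finite_uw: "finite {u, w}" by simp
  obtain y R where yR: "y \<notin> {u, w}" "definable K False i R" "\<forall>e. env_in K e \<longrightarrow> P e = (\<exists>a\<in>D. R (e(y:=a)))"
    by (rule Sigma_Suc_single_ex[OF dom_nonempty bqP less_common_bound P finite_uw])
  obtain S where S: "supported K R S" using definable_supported[OF yR(2)] by blast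
  obtain z where z: "z \<notin> S \<union> {u, y, w}" using fresh_var[of "S \<union> {u, y, w}"] supported_finite[OF S] by auto
  let ?T = "\<lambda>e. \<exists>b\<in>D. ball_below K u w (bex_below K y z R) (e(z:=b))"
  have I1: "definable K False i (bex_below K y z R)" using bqP[OF _ yR(2), of y z] z by auto
  have I2: "definable K False i (ball_below K u w (bex_below K y z R))" using bq I1 uw unfolding bounded_quantifier_closed_def by auto
  have clT: "definable K True (Suc i) ?T" by (rule definable_ex[OF definable_Suc_dual]) (use I2 in simp)
  show ?thesis
  proof (rule definable_cong[OF clT])
    fix e assume e: "env_in K e"
    have Req: "R (e(z:=b, u:=a, y:=c)) = R (e(u:=a, y:=c))" if "b \<in> D" "a \<in> D" "c \<in> D" for b a c
      by (rule supported_eq[OF S]) (use that e z in \<open>auto intro!: env_in_upd\<close>)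
    have Pu: "P (e(u:=a)) = (\<exists>c\<in>D. R (e(u:=a, y:=c)))" if "a \<in> D" for a
      using yR(3) env_in_upd[OF e that] by simp
    have T: "?T e = (\<exists>b\<in>D. \<forall>a\<in>D. a \<prec> e w \<longrightarrow> (\<exists>c\<in>D. c \<prec> b \<and> R (e(u:=a, y:=c))))"
      unfolding ball_below_def bex_below_def using z Req yR(1) by (simp cong: conj_cong)
    have B: "ball_below K u w P e = (\<forall>a\<in>D. a \<prec> e w \<longrightarrow> (\<exists>c\<in>D. R (e(u:=a, y:=c))))"
      unfolding ball_below_def using Pu by simp
    show "?T e = ball_below K u w P e"
    proof
      assume "?T e" then show "ball_below K u w P e" unfolding T B by blast
    next
      assume "ball_below K u w P e"
      then have "\<exists>b\<in>D. \<forall>a\<in>D. a \<prec> e w \<longrightarrow> (\<exists>c\<in>D. c \<prec> b \<and> R (e(u:=a, y:=c)))"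
        unfolding B using bounded_collection[OF j bq yR(2), of u y w e] yR(1) uw e by auto
      then show "?T e" unfolding T .
    qed
  qed
qed

lemma bounded_quantifier_closed_upto: "j \<le> n \<Longrightarrow> bounded_quantifier_closed K j"
proof (induction j)
  case 0
  show ?case unfolding bounded_quantifier_closed_def
  proof (intro allI impI conjI)
    fix b :: bool and P and u w :: nat assume uw: "u \<noteq> w" and P: "definable K b 0 P"
    show "definable K b 0 (bex_below K u w P)" using definable0_bex_below[OF P] .
    show "definable K b 0 (ball_below K u w P)" using definable0_ball_below[OF P] .
  qed
next
  case (Suc i)
  then have bq: "bounded_quantifier_closed K i" by simp
  have sb: "definable K True (Suc i) (ball_below K u w P)" if "u \<noteq> w" "definable K True (Suc i) P" for u w P
    by (rule definable_Sigma_ball_below[OF Suc.prems bq that])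
  show ?case unfolding bounded_quantifier_closed_def
  proof (intro allI impI conjI)
    fix b :: bool and P and u w :: nat assume uw: "u \<noteq> w" and P: "definable K b (Suc i) P"
    show "definable K b (Suc i) (bex_below K u w P)"
    proof (cases b)
      case True then show ?thesis using definable_Sigma_bex_below[OF dom_nonempty uw] P by simp
    next
      case False
      have "definable K True (Suc i) (\<lambda>e. \<not> P e)" using definable_neg[OF P] False by simp
      then have "definable K True (Suc i) (ball_below K u w (\<lambda>e. \<not> P e))" by (rule sb[OF uw])
      then have "definable K False (Suc i) (\<lambda>e. \<not> ball_below K u w (\<lambda>e. \<not> P e) e)" using definable_neg by fastforce
      then have "definable K False (Suc i) (bex_below K u w P)" by (rule definable_cong) (simp add: not_ball_below)
      then show ?thesis using False by simp
    qed
    show "definable K b (Suc i) (ball_below K u w P)"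
    proof (cases b)
      case True then show ?thesis using sb[OF uw] P by simp
    next
      case False then show ?thesis using definable_Pi_ball_below[OF dom_nonempty uw] P by simp
    qed
  qed
qed

lemma definable_Pi_bex_below:
  "j \<le> n \<Longrightarrow> u \<noteq> w \<Longrightarrow> definable K False j P \<Longrightarrow> definable K False j (bex_below K u w P)"
  using bounded_quantifier_closed_upto unfolding bounded_quantifier_closed_def by blast

lemma (in pa_minus) definable_failure_below:
  assumes Q: "definable K False j Q" and e: "env_in K e" and c: "c \<in> D"
  shows "\<exists>P e0. definable K True j P \<and> env_in K e0
    \<and> (\<forall>t\<in>D. P (e0(x := t)) = (\<exists>d\<in>D. d \<prec> c \<oplus> \<one> \<and> d \<oplus> t = c \<and> \<not> Q (e(x := d))))"
proof -
  obtain S where S: "supported K Q S" using definable_supported[OF Q] by blast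
  obtain y where y: "y \<notin> S \<union> {x}" using fresh_var[of "S \<union> {x}"] supported_finite[OF S] by auto
  obtain z where z: "z \<notin> S \<union> {x, y}" using fresh_var[of "S \<union> {x, y}"] supported_finite[OF S] by auto
  obtain w where w: "w \<notin> S \<union> {x, y, z}" using fresh_var[of "S \<union> {x, y, z}"] supported_finite[OF S] by auto
  let ?Q' = "\<lambda>e'. Q (e' \<circ> swap_var x y)"
  have Q': "definable K False j ?Q'" by (rule definable_rename[OF inj_swap_var Q])
  let ?In = "\<lambda>e'. e' y \<oplus> e' x = e' w \<and> \<not> ?Q' e'"
  have eqc: "definable K True j (\<lambda>e'. e' y \<oplus> e' x = e' w)"
    using definable_eq[of K True j "Plus (Var y) (Var x)" "Var w"] by simp
  have In: "definable K True j ?In" by (rule definable_conj[OF dom_nonempty eqc]) (use definable_neg[OF Q'] in simp)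
  have P: "definable K True j (bex_below K y z ?In)"
    by (rule definable_Sigma_bex_below[OF dom_nonempty _ In]) (use z in simp)
  define e0 where "e0 = e(z := c \<oplus> \<one>, w := c)"
  have e0: "env_in K e0" unfolding e0_def using e c by (auto intro!: env_in_upd)
  have Q_swap: "Q ((e0(x := t, y := d)) \<circ> swap_var x y) = Q (e(x := d))" if "t \<in> D" "d \<in> D" for t d
  proof (rule supported_eq[OF S])
    show "env_in K ((e0(x := t, y := d)) \<circ> swap_var x y)" by (rule env_in_comp) (use e0 that in \<open>auto intro!: env_in_upd\<close>)
    show "env_in K (e(x := d))" using e that by (auto intro!: env_in_upd)
    fix i assume "i \<in> S"
    then show "((e0(x := t, y := d)) \<circ> swap_var x y) i = (e(x := d)) i" using y z w unfolding e0_def swap_var_def by auto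
  qed
  have "bex_below K y z ?In (e0(x := t)) = (\<exists>d\<in>D. d \<prec> c \<oplus> \<one> \<and> d \<oplus> t = c \<and> \<not> Q (e(x := d)))"
    if t: "t \<in> D" for t
  proof -
    have "bex_below K y z ?In (e0(x := t))
        = (\<exists>d\<in>D. d \<prec> c \<oplus> \<one> \<and> d \<oplus> t = c \<and> \<not> Q ((e0(x := t, y := d)) \<circ> swap_var x y))"
      unfolding bex_below_def using y z w by (simp add: e0_def)
    then show ?thesis using Q_swap t by (auto cong: conj_cong)
  qed
  with P e0 show ?thesis by blast
qed

text \<open>If \<open>Q\<close> failed at \<open>c\<close>, \<open>\<Sigma>\<^sub>j\<close>-induction on \<open>t\<close> for \<open>\<exists>d \<le> c. d + t = c \<and> \<not> Q d\<close>
  would push the failure down to \<open>0\<close>.\<close>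

lemma pi_induct:
  assumes Q: "definable K False j Q" and j: "j \<le> n" and e: "env_in K e" and base: "Q (e(x := \<zero>))"
    and step: "\<And>a. a \<in> D \<Longrightarrow> Q (e(x := a)) \<Longrightarrow> Q (e(x := a \<oplus> \<one>))" and c: "c \<in> D"
  shows "Q (e(x := c))"
proof (rule ccontr)
  assume nQ: "\<not> Q (e(x := c))"
  let ?T = "\<lambda>t. \<exists>d\<in>D. d \<prec> c \<oplus> \<one> \<and> d \<oplus> t = c \<and> \<not> Q (e(x := d))"
  obtain P e0 where P: "definable K True j P" "env_in K e0" "\<forall>t\<in>D. P (e0(x := t)) = ?T t"
    using definable_failure_below[OF Q e c, of x] by blast
  have "?T c"
  proof (rule sigma_induct[where Q="?T", OF P(1) j P(2)])
    show "P (e0(x := t)) = ?T t" if "t \<in> D" for t using P(3) that by blast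
  next
    show "?T \<zero>" using nQ c by (intro bexI[of _ c]) auto
  next
    fix t assume t: "t \<in> D" and "?T t"
    then obtain d where d: "d \<in> D" "d \<prec> c \<oplus> \<one>" "d \<oplus> t = c" "\<not> Q (e(x := d))" by blast
    have "d \<noteq> \<zero>" using d base by auto
    then obtain d' where d': "d' \<in> D" "d = d' \<oplus> \<one>" using eq_Suc_pred d by blast
    have "\<not> Q (e(x := d'))" using step[OF d'(1)] d d' by auto
    moreover have "d' \<oplus> (t \<oplus> \<one>) = c" using d d' t by (simp add: ac)
    moreover have "d' \<prec> c \<oplus> \<one>" using d d' c by (meson add_dom one_dom less_add1 trans)
    ultimately show "?T (t \<oplus> \<one>)" using d' by blast
  qed (rule c)
  then obtain d where d: "d \<in> D" "d \<oplus> c = c" "\<not> Q (e(x := d))" by blast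
  have "d = \<zero>" using add_cancel_r[of d "\<zero>" c] d c by simp
  then show False using d base by simp
qed

end

section \<open>End extensions\<close>

lemma eval_restr: "eval (restr K M) e t = eval K e t"
  by (induction t) (auto simp: restr_def)

lemma restr_simps [simp]:
  "dom (restr K M) = M" "lt (restr K M) = lt K" "zer (restr K M) = zer K"
  by (auto simp: restr_def)

definition Sigma_coded :: "nat \<Rightarrow> 'a set \<Rightarrow> 'a struc \<Rightarrow> fm \<Rightarrow> nat \<Rightarrow> nat \<Rightarrow> bool" where
  "Sigma_coded k M K eps vx vy \<longleftrightarrow> (\<forall>f x e a. Sigma k f \<and> env_in K e \<and> a \<in> M \<longrightarrow>
     (\<exists>c\<in>dom K. \<forall>u\<in>dom K. lt K u a \<longrightarrow> (sat K (e(x := u)) f \<longleftrightarrow> bit_in K eps vx vy u c)))"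

definition Pi_collection :: "nat \<Rightarrow> 'a set \<Rightarrow> 'a struc \<Rightarrow> bool" where
  "Pi_collection k M K \<longleftrightarrow> (\<forall>g x y e a. Pi k g \<and> x \<noteq> y \<and> env_in K e \<and> a \<in> M \<longrightarrow>
     (\<exists>b\<in>dom K. \<forall>u\<in>dom K. lt K u a \<longrightarrow>
        ((\<exists>w\<in>dom K. sat K (e(x := u, y := w)) g) \<longleftrightarrow> (\<exists>w\<in>dom K. lt K w b \<and> sat K (e(x := u, y := w)) g))))"

locale end_extension = isigma_exp +
  fixes M :: "'a set"
  assumes end_ext: "end_ext M K"
    and M_exp: "exp_ok (restr K M) eps vx vy"
begin

lemma M_subset: "M \<subseteq> D"
  and zero_in_M: "\<zero> \<in> M" and one_in_M: "\<one> \<in> M"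
  and add_in_M: "x \<in> M \<Longrightarrow> y \<in> M \<Longrightarrow> x \<oplus> y \<in> M"
  and mul_in_M: "x \<in> M \<Longrightarrow> y \<in> M \<Longrightarrow> x \<otimes> y \<in> M"
  using end_ext unfolding end_ext_def by auto

lemma M_initial: "u \<in> D \<Longrightarrow> a \<in> M \<Longrightarrow> u \<prec> a \<Longrightarrow> u \<in> M"
  using end_ext asym M_subset unfolding end_ext_def by blast

lemma eval_in_M: "(\<forall>i. e i \<in> M) \<Longrightarrow> eval K e t \<in> M"
  by (induction t) (auto simp: zero_in_M one_in_M add_in_M mul_in_M)

lemma delta0_absolute: "delta0 f \<Longrightarrow> (\<forall>i. e i \<in> M) \<Longrightarrow> sat (restr K M) e f = sat K e f"
proof (induction f arbitrary: e)
  case (BEx v t f)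
  have M_iff: "a \<in> D \<and> a \<prec> eval K e t \<longleftrightarrow> a \<in> M \<and> a \<prec> eval K e t" for a
    using M_initial eval_in_M[OF BEx.prems(2)] M_subset by blast
  have "sat (restr K M) (e(v := a)) f = sat K (e(v := a)) f" if "a \<in> M" for a
    using BEx.IH BEx.prems that by simp
  then have "(\<exists>a\<in>M. a \<prec> eval K e t \<and> sat (restr K M) (e(v := a)) f)
    \<longleftrightarrow> (\<exists>a\<in>D. a \<prec> eval K e t \<and> sat K (e(v := a)) f)"
    using M_iff by blast
  then show ?case by (simp add: eval_restr)
next
  case (BAll v t f)
  have M_iff: "a \<in> D \<and> a \<prec> eval K e t \<longleftrightarrow> a \<in> M \<and> a \<prec> eval K e t" for a
    using M_initial eval_in_M[OF BAll.prems(2)] M_subset by blast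
  have "sat (restr K M) (e(v := a)) f = sat K (e(v := a)) f" if "a \<in> M" for a
    using BAll.IH BAll.prems that by simp
  then have "(\<forall>a\<in>M. a \<prec> eval K e t \<longrightarrow> sat (restr K M) (e(v := a)) f)
    \<longleftrightarrow> (\<forall>a\<in>D. a \<prec> eval K e t \<longrightarrow> sat K (e(v := a)) f)"
    using M_iff by blast
  then show ?case by (simp add: eval_restr)
qed (simp_all add: eval_restr)

lemma pow2_in_M:
  assumes a: "a \<in> M"
  obtains A where "A \<in> M" "pow2 a A"
proof -
  obtain A where A: "A \<in> M" "Egraph (restr K M) eps vx vy a A" using M_exp a unfolding exp_ok_def by auto
  have "sat (restr K M) ((\<lambda>_. zer K)(vx := a, vy := A)) eps = sat K ((\<lambda>_. zer K)(vx := a, vy := A)) eps"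
    by (rule delta0_absolute) (use exp_fm(1) a A zero_in_M in auto)
  with A that show ?thesis unfolding Egraph_def by auto
qed

lemma M_ISigma_induct:
  assumes M_ind: "M_ISigma (Suc n) M K" and P: "definable K True (Suc n) P" and e: "env_in K e" and a: "a \<in> M"
    and val: "\<And>k. k \<in> D \<Longrightarrow> P (e(x := k)) = Q k" and base: "Q \<zero>"
    and step: "\<And>k. k \<in> D \<Longrightarrow> k \<prec> a \<Longrightarrow> Q k \<Longrightarrow> Q (k \<oplus> \<one>)"
    and k: "k \<in> D" "k \<prec> a"
  shows "Q k"
proof -
  obtain f where f: "Sigma (Suc n) f" "\<forall>e. env_in K e \<longrightarrow> P e = sat K e f"
    using P unfolding definable_def by auto
  have sat_Q: "sat K (e(x := k)) f = Q k" if "k \<in> D" for k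
    using f(2) env_in_upd[OF e that] val[OF that] by simp
  have "sat K (e(x := \<zero>)) f" using sat_Q[of "\<zero>"] base by simp
  moreover have "\<forall>b\<in>D. b \<prec> a \<longrightarrow> sat K (e(x := b)) f \<longrightarrow> sat K (e(x := b \<oplus> \<one>)) f"
    using sat_Q step by simp
  ultimately have "sat K (e(x := k)) f"
    using M_ind[unfolded M_ISigma_def, rule_format, of f e a x k] f(1) e a k by blast
  then show ?thesis using sat_Q k by simp
qed

lemma M_ISigma_breakpoint:
  assumes M_ind: "M_ISigma (Suc n) M K" and P: "definable K True (Suc n) P" and e: "env_in K e"
    and val: "\<And>k. k \<in> D \<Longrightarrow> P (e(x := k)) = Q k" and base: "Q \<zero>" and c: "c \<in> M" "\<not> Q c"
  obtains k where "k \<in> D" "Q k" "\<not> Q (k \<oplus> \<one>)"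
proof -
  have cD: "c \<in> D" using c M_subset by blast
  have "\<exists>k\<in>D. Q k \<and> \<not> Q (k \<oplus> \<one>)"
  proof (rule ccontr)
    assume no_break: "\<not> (\<exists>k\<in>D. Q k \<and> \<not> Q (k \<oplus> \<one>))"
    have "Q c"
    proof (rule M_ISigma_induct[OF M_ind P e add_in_M[OF c(1) one_in_M] val base])
      fix k assume "k \<in> D" "Q k"
      with no_break show "Q (k \<oplus> \<one>)" by blast
    qed (use cD in simp_all)
    with c show False by blast
  qed
  with that show ?thesis by blast
qed

definition sound_code :: "'a \<Rightarrow> ('a \<Rightarrow> 'a \<Rightarrow> bool) \<Rightarrow> 'a \<Rightarrow> 'a \<Rightarrow> bool" where
  "sound_code a R d b \<longleftrightarrow> (\<forall>u\<in>D. u \<prec> a \<longrightarrow> bit u d \<longrightarrow> (\<exists>w\<in>D. w \<prec> b \<and> R u w))"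

definition sound_code_between :: "'a \<Rightarrow> 'a \<Rightarrow> 'a \<Rightarrow> ('a \<Rightarrow> 'a \<Rightarrow> bool) \<Rightarrow> bool" where
  "sound_code_between k A a R \<longleftrightarrow> (\<exists>d\<in>D. d \<prec> A \<and> k \<preceq> d \<and> (\<exists>b\<in>D. sound_code a R d b))"

lemma sound_code_zero: "sound_code a R \<zero> \<zero>"
  unfolding sound_code_def using not_bit_zero by blast

lemma sound_code_add_pow2:
  assumes code: "sound_code a R d b" and D: "u \<in> D" "d \<in> D" "p \<in> D" "b \<in> D" "w0 \<in> D"
    and E: "pow2 u p" and nb: "\<not> bit u d" and w0: "R u w0"
  shows "\<exists>m\<in>D. sound_code a R (d \<oplus> p) m"
proof -
  obtain m where m: "m \<in> D" "b \<prec> m" "w0 \<prec> m" using less_common_bound D by blast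
  have "\<exists>w\<in>D. w \<prec> m \<and> R u' w" if u': "u' \<in> D" "u' \<prec> a" "bit u' (d \<oplus> p)" for u'
  proof -
    have "bit u' d \<or> u' = u" using bit_add_pow2[OF D(1-3) u'(1) E nb] u'(3) by simp
    then show ?thesis
    proof
      assume "bit u' d"
      then obtain w where "w \<in> D" "w \<prec> b" "R u' w" using code u' unfolding sound_code_def by blast
      with m D show ?thesis using trans[of w b m] by blast
    qed (use w0 m D in blast)
  qed
  with m show ?thesis unfolding sound_code_def by blast
qed

text \<open>If a digit \<open>u < a\<close> with a witness were missing from \<open>d\<close>, adding \<open>2\<^sup>u\<close> would give a
  sound code in \<open>[k + 1, 2\<^sup>a)\<close>.\<close>

lemma sound_code_complete:
  assumes D: "a \<in> D" "A \<in> D" "k \<in> D" "d \<in> D" "b \<in> D" and EA: "pow2 a A"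
    and d: "d \<prec> A" "k \<preceq> d" and code: "sound_code a R d b"
    and max: "\<not> sound_code_between (k \<oplus> \<one>) A a R"
    and u: "u \<in> D" "u \<prec> a" and w0: "w0 \<in> D" "R u w0"
  shows "bit u d"
proof (rule ccontr)
  assume nb: "\<not> bit u d"
  obtain p where p: "p \<in> D" "pow2 u p" using pow2_total u by blast
  have "d \<oplus> p \<prec> A" by (rule add_pow2_less[OF u(1) D(4) p(1) D(1,2) p(2) EA nb u(2) d(1)])
  moreover have "k \<oplus> \<one> \<preceq> d \<oplus> p"
  proof -
    have "d \<prec> d \<oplus> p" using less_add D p pow2_pos u by blast
    then have "k \<prec> d \<oplus> p" using le_less_trans[of k d "d \<oplus> p"] d D p by simp
    then show ?thesis using less_succ_le D p by simp
  qed
  moreover obtain m where "m \<in> D" "sound_code a R (d \<oplus> p) m"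
    using sound_code_add_pow2[OF code u(1) D(4) p(1) D(5) w0(1) p(2) nb w0(2)] by blast
  ultimately have "sound_code_between (k \<oplus> \<one>) A a R"
    unfolding sound_code_between_def using add_dom[OF D(4) p(1)] by blast
  with max show False by blast
qed

lemma definable_sound_code_between:
  assumes R: "definable K False n R" and xy: "x \<noteq> y" and e: "env_in K e" and D: "a \<in> D" "A \<in> D"
  shows "\<exists>Psi e0 kv. definable K True (Suc n) Psi \<and> env_in K e0
    \<and> (\<forall>k\<in>D. Psi (e0(kv := k)) = sound_code_between k A a (\<lambda>u w. R (e(x := u, y := w))))"
proof -
  obtain S where S: "supported K R S" using definable_supported[OF R] by blast
  have fS: "finite S" using supported_finite[OF S] .
  obtain kv where kv: "kv \<notin> S \<union> {x, y}" using fresh_var[of "S \<union> {x, y}"] fS by auto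
  obtain dv where dv: "dv \<notin> S \<union> {x, y, kv}" using fresh_var[of "S \<union> {x, y, kv}"] fS by auto
  obtain bv where bv: "bv \<notin> S \<union> {x, y, kv, dv}" using fresh_var[of "S \<union> {x, y, kv, dv}"] fS by auto
  obtain Av where Av: "Av \<notin> S \<union> {x, y, kv, dv, bv}" using fresh_var[of "S \<union> {x, y, kv, dv, bv}"] fS by auto
  obtain av where av: "av \<notin> S \<union> {x, y, kv, dv, bv, Av}" using fresh_var[of "S \<union> {x, y, kv, dv, bv, Av}"] fS by auto
  let ?code = "ball_below K x av (\<lambda>e'. \<not> bit (e' x) (e' dv) \<or> bex_below K y bv R e')"
  have "definable K False n (\<lambda>e'. \<not> bit (e' x) (e' dv))"
    using definable_neg[OF definable_bit[of x dv True n]] dv by simp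
  moreover have "definable K False n (bex_below K y bv R)"
    using definable_Pi_bex_below[OF order.refl _ R] bv by simp
  ultimately have "definable K False n (\<lambda>e'. \<not> bit (e' x) (e' dv) \<or> bex_below K y bv R e')"
    by (rule definable_disj[OF dom_nonempty])
  then have "definable K False n ?code" using definable_Pi_ball_below[OF dom_nonempty] av by simp
  then have code: "definable K True (Suc n) (\<lambda>e'. \<exists>b\<in>D. ?code (e'(bv := b)))"
    by (intro definable_ex definable_Suc_dual) simp
  have range: "definable K True (Suc n) (\<lambda>e'. e' dv \<prec> e' Av \<and> (e' kv \<prec> e' dv \<or> e' kv = e' dv))"
    using definable_conj[OF dom_nonempty definable_lt[of K True "Suc n" "Var dv" "Var Av"] definable_le] by simp
  let ?body = "\<lambda>e'. (e' dv \<prec> e' Av \<and> (e' kv \<prec> e' dv \<or> e' kv = e' dv)) \<and> (\<exists>b\<in>D. ?code (e'(bv := b)))"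
  let ?Psi = "\<lambda>e'. \<exists>d\<in>D. ?body (e'(dv := d))"
  have "definable K True (Suc n) ?Psi"
    by (rule definable_ex[OF definable_conj[OF dom_nonempty range code]])
  moreover define e0 where "e0 = e(Av := A, av := a)"
  have "env_in K e0" unfolding e0_def using e D by (auto intro!: env_in_upd)
  moreover have "?Psi (e0(kv := k)) = sound_code_between k A a (\<lambda>u w. R (e(x := u, y := w)))"
    if k: "k \<in> D" for k
  proof -
    have R_upd: "R (e0(kv := k, dv := d, bv := b, x := u, y := w)) = R (e(x := u, y := w))"
      if "d \<in> D" "b \<in> D" "u \<in> D" "w \<in> D" for d b u w
      by (rule supported_eq[OF S]) (use that k e \<open>env_in K e0\<close> kv dv bv Av av in \<open>auto intro!: env_in_upd simp: e0_def\<close>)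
    have ne: "kv \<noteq> x" "kv \<noteq> y" "dv \<noteq> x" "dv \<noteq> y" "dv \<noteq> kv" "bv \<noteq> x" "bv \<noteq> y" "bv \<noteq> kv" "bv \<noteq> dv"
      "Av \<noteq> x" "Av \<noteq> y" "Av \<noteq> kv" "Av \<noteq> dv" "Av \<noteq> bv" "av \<noteq> x" "av \<noteq> y" "av \<noteq> kv" "av \<noteq> dv" "av \<noteq> bv" "av \<noteq> Av"
      using kv dv bv Av av by auto
    show ?thesis
      unfolding sound_code_between_def sound_code_def ball_below_def bex_below_def
      using xy R_upd k ne ne[symmetric] by (simp add: e0_def cong: conj_cong)
  qed
  ultimately show ?thesis by blast
qed

text \<open>By \<open>M\<close>-\<open>I\<Sigma>\<^sub>n\<^sub>+\<^sub>1\<close> there is a largest \<open>k < 2\<^sup>a\<close> below some sound code; that code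
  is then complete, and its witness bound \<open>b\<close> bounds all witnesses.\<close>

lemma M_ISigma_code_and_bound:
  assumes M_ind: "M_ISigma (Suc n) M K" and R: "definable K False n R" and xy: "x \<noteq> y"
    and e: "env_in K e" and a: "a \<in> M"
  obtains d b where "d \<in> D" "b \<in> D" "\<forall>u\<in>D. u \<prec> a \<longrightarrow>
     ((\<exists>w\<in>D. R (e(x := u, y := w))) \<longleftrightarrow> bit u d) \<and>
     ((\<exists>w\<in>D. R (e(x := u, y := w))) \<longleftrightarrow> (\<exists>w\<in>D. w \<prec> b \<and> R (e(x := u, y := w))))"
proof -
  let ?R = "\<lambda>u w. R (e(x := u, y := w))"
  have aD: "a \<in> D" using a M_subset by blast
  obtain A where A: "A \<in> M" "pow2 a A" using pow2_in_M[OF a] by blast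
  have AD: "A \<in> D" using A M_subset by blast
  obtain Psi e0 kv where Psi: "definable K True (Suc n) Psi" "env_in K e0"
    "\<And>k. k \<in> D \<Longrightarrow> Psi (e0(kv := k)) = sound_code_between k A a ?R"
    using definable_sound_code_between[OF R xy e aD AD] by blast
  have zero: "sound_code_between \<zero> A a ?R"
    unfolding sound_code_between_def using sound_code_zero pow2_pos[OF aD AD A(2)] zero_dom by blast
  have top: "\<not> sound_code_between A A a ?R"
    unfolding sound_code_between_def using AD asym by blast
  obtain k where k: "k \<in> D" "sound_code_between k A a ?R" "\<not> sound_code_between (k \<oplus> \<one>) A a ?R"
    by (rule M_ISigma_breakpoint[OF M_ind Psi(1,2) Psi(3) zero A(1) top])
  then obtain d b where db: "d \<in> D" "d \<prec> A" "k \<preceq> d" "b \<in> D" "sound_code a ?R d b"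
    unfolding sound_code_between_def by blast
  have complete: "bit u d" if "u \<in> D" "u \<prec> a" "w0 \<in> D" "?R u w0" for u w0
    by (rule sound_code_complete[OF aD AD k(1) db(1,4) A(2) db(2,3,5) k(3) that])
  have "\<forall>u\<in>D. u \<prec> a \<longrightarrow> ((\<exists>w\<in>D. ?R u w) \<longleftrightarrow> bit u d) \<and> ((\<exists>w\<in>D. ?R u w) \<longleftrightarrow> (\<exists>w\<in>D. w \<prec> b \<and> ?R u w))"
    using complete db(5) unfolding sound_code_def by blast
  with db(1,4) show ?thesis by (rule that)
qed

lemma M_ISigma_imp_Sigma_coded:
  assumes M_ind: "M_ISigma (Suc n) M K"
  shows "Sigma_coded (Suc n) M K eps vx vy"
  unfolding Sigma_coded_def
proof (intro allI impI)
  fix f and x :: nat and e a assume h: "Sigma (Suc n) f \<and> env_in K e \<and> a \<in> M"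
  then have e: "env_in K e" and a: "a \<in> M" and f: "definable K True (Suc n) (\<lambda>e. sat K e f)"
    by (blast intro: definable_sat)+
  obtain y R where yR: "y \<notin> {x}" "definable K False n R" "\<forall>e. env_in K e \<longrightarrow> sat K e f = (\<exists>a\<in>D. R (e(y := a)))"
    by (rule Sigma_Suc_single_ex[OF dom_nonempty definable_Pi_bex_below[OF order.refl] less_common_bound f
          finite.insertI[OF finite.emptyI, of x]])
  have xy: "x \<noteq> y" using yR(1) by simp
  obtain d b where d: "d \<in> D" "b \<in> D" "\<forall>u\<in>D. u \<prec> a \<longrightarrow>
     ((\<exists>w\<in>D. R (e(x := u, y := w))) \<longleftrightarrow> bit u d) \<and>
     ((\<exists>w\<in>D. R (e(x := u, y := w))) \<longleftrightarrow> (\<exists>w\<in>D. w \<prec> b \<and> R (e(x := u, y := w))))"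
    by (rule M_ISigma_code_and_bound[OF M_ind yR(2) xy e a])
  have "sat K (e(x := u)) f \<longleftrightarrow> bit u d" if "u \<in> D" "u \<prec> a" for u
    using yR(3) env_in_upd[OF e that(1)] d(3) that by simp
  with d(1) show "\<exists>c\<in>D. \<forall>u\<in>D. u \<prec> a \<longrightarrow> (sat K (e(x := u)) f \<longleftrightarrow> bit_in K eps vx vy u c)" by blast
qed

lemma M_ISigma_imp_Pi_collection:
  assumes M_ind: "M_ISigma (Suc n) M K"
  shows "Pi_collection n M K"
  unfolding Pi_collection_def
proof (intro allI impI)
  fix g and x y :: nat and e a assume h: "Pi n g \<and> x \<noteq> y \<and> env_in K e \<and> a \<in> M"
  then have g: "definable K False n (\<lambda>e. sat K e g)" and xy: "x \<noteq> y" and e: "env_in K e" and a: "a \<in> M"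
    by (blast intro: definable_sat)+
  obtain d b where "d \<in> D" "b \<in> D" "\<forall>u\<in>D. u \<prec> a \<longrightarrow>
     ((\<exists>w\<in>D. sat K (e(x := u, y := w)) g) \<longleftrightarrow> bit u d) \<and>
     ((\<exists>w\<in>D. sat K (e(x := u, y := w)) g) \<longleftrightarrow> (\<exists>w\<in>D. w \<prec> b \<and> sat K (e(x := u, y := w)) g))"
    by (rule M_ISigma_code_and_bound[OF M_ind g xy e a])
  then show "\<exists>b\<in>D. \<forall>u\<in>D. u \<prec> a \<longrightarrow>
      ((\<exists>w\<in>D. sat K (e(x := u, y := w)) g) \<longleftrightarrow> (\<exists>w\<in>D. w \<prec> b \<and> sat K (e(x := u, y := w)) g))"
    by blast
qed

text \<open>Below \<open>a\<close>, induction for the \<open>\<Sigma>\<^sub>n\<^sub>+\<^sub>1\<close> formula becomes \<open>\<Pi>\<^sub>n\<close>-induction, which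
  holds in \<open>K\<close>.\<close>

lemma M_ISigma_if_locally_Pi:
  assumes local: "\<And>f x e a. Sigma (Suc n) f \<Longrightarrow> env_in K e \<Longrightarrow> a \<in> M \<Longrightarrow> \<exists>Q e'. definable K False n Q
      \<and> env_in K e' \<and> (\<forall>t\<in>D. t \<prec> a \<longrightarrow> Q (e'(x := t)) = sat K (e(x := t)) f)"
  shows "M_ISigma (Suc n) M K"
  unfolding M_ISigma_def
proof (intro allI impI)
  fix f x e a assume h: "Sigma (Suc n) f \<and> env_in K e \<and> a \<in> M"
    and ind: "sat K (e(x := \<zero>)) f \<and> (\<forall>b\<in>D. b \<prec> a \<longrightarrow> sat K (e(x := b)) f \<longrightarrow> sat K (e(x := b \<oplus> \<one>)) f)"
  have aD: "a \<in> D" using h M_subset by blast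
  obtain Q e' where Q: "definable K False n Q" "env_in K e'"
    "\<forall>t\<in>D. t \<prec> a \<longrightarrow> Q (e'(x := t)) = sat K (e(x := t)) f"
    using local[of f e a x] h by blast
  obtain S where S: "supported K Q S" using definable_supported[OF Q(1)] by blast
  obtain av where av: "av \<notin> S \<union> {x}" using fresh_var[of "S \<union> {x}"] supported_finite[OF S] by auto
  define e1 where "e1 = e'(av := a)"
  have e1: "env_in K e1" unfolding e1_def using Q(2) aD by (rule env_in_upd)
  have Q_upd: "Q (e1(x := t)) = Q (e'(x := t))" if "t \<in> D" for t
    by (rule supported_eq[OF S]) (use that av Q(2) e1 in \<open>auto simp: e1_def intro!: env_in_upd\<close>)
  let ?P = "\<lambda>e'. \<not> e' x \<prec> e' av \<or> Q e'"
  have "definable K False n (\<lambda>e'. \<not> e' x \<prec> e' av)"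
    using definable_neg[OF definable_lt[of K True n "Var x" "Var av"]] by simp
  then have P: "definable K False n ?P" by (rule definable_disj[OF dom_nonempty _ Q(1)])
  have P_iff: "?P (e1(x := t)) \<longleftrightarrow> (t \<prec> a \<longrightarrow> sat K (e(x := t)) f)" if "t \<in> D" for t
    using Q(3) Q_upd[OF that] that av by (auto simp: e1_def)
  have "?P (e1(x := t))" if "t \<in> D" for t
  proof (rule pi_induct[OF P order.refl e1 _ _ that])
    show "?P (e1(x := \<zero>))" using P_iff[OF zero_dom] ind by simp
  next
    fix s assume s: "s \<in> D" and "?P (e1(x := s))"
    then have IH: "s \<prec> a \<longrightarrow> sat K (e(x := s)) f" using P_iff by simp
    have "sat K (e(x := s \<oplus> \<one>)) f" if "s \<oplus> \<one> \<prec> a"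
    proof -
      have "s \<prec> a" by (rule trans[OF _ _ _ less_add1[OF s] that]) (use s aD in simp_all)
      with IH ind s show ?thesis by blast
    qed
    then show "?P (e1(x := s \<oplus> \<one>))" using P_iff s by simp
  qed
  then show "\<forall>b\<in>D. b \<prec> a \<longrightarrow> sat K (e(x := b)) f" using P_iff by blast
qed

lemma Sigma_coded_imp_M_ISigma:
  assumes coded: "Sigma_coded (Suc n) M K eps vx vy"
  shows "M_ISigma (Suc n) M K"
proof (rule M_ISigma_if_locally_Pi)
  fix f x e a assume h: "Sigma (Suc n) f" "env_in K e" "a \<in> M"
  then obtain c where c: "c \<in> D" "\<forall>u\<in>D. u \<prec> a \<longrightarrow> (sat K (e(x := u)) f \<longleftrightarrow> bit u c)"
    using coded unfolding Sigma_coded_def by blast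
  obtain cv where cv: "cv \<noteq> x" using fresh_var[of "{x}"] by auto
  have "definable K False n (\<lambda>e'. bit (e' x) (e' cv))" using definable_bit cv by metis
  moreover have "env_in K (e(cv := c))" using env_in_upd h(2) c(1) .
  moreover have "\<forall>t\<in>D. t \<prec> a \<longrightarrow> bit ((e(cv := c, x := t)) x) ((e(cv := c, x := t)) cv) = sat K (e(x := t)) f"
    using c cv by simp
  ultimately show "\<exists>Q e'. definable K False n Q \<and> env_in K e' \<and> (\<forall>t\<in>D. t \<prec> a \<longrightarrow> Q (e'(x := t)) = sat K (e(x := t)) f)"
    by (intro exI[of _ "\<lambda>e'. bit (e' x) (e' cv)"] exI[of _ "e(cv := c)"]) simp
qed

lemma Pi_collection_imp_M_ISigma:
  assumes coll: "Pi_collection n M K"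
  shows "M_ISigma (Suc n) M K"
proof (rule M_ISigma_if_locally_Pi)
  fix f x e a assume h: "Sigma (Suc n) f" "env_in K e" "a \<in> M"
  from h(1) have f: "definable K True (Suc n) (\<lambda>e. sat K e f)" by (rule definable_sat)
  obtain y R where yR: "y \<notin> {x}" "definable K False n R" "\<forall>e. env_in K e \<longrightarrow> sat K e f = (\<exists>a\<in>D. R (e(y := a)))"
    by (rule Sigma_Suc_single_ex[OF dom_nonempty definable_Pi_bex_below[OF order.refl] less_common_bound f
          finite.insertI[OF finite.emptyI, of x]])
  obtain g where g: "Pi n g" "\<forall>e. env_in K e \<longrightarrow> R e = sat K e g" using yR(2) unfolding definable_def by blast
  obtain b where b: "b \<in> D" "\<forall>u\<in>D. u \<prec> a \<longrightarrow>
      ((\<exists>w\<in>D. sat K (e(x := u, y := w)) g) \<longleftrightarrow> (\<exists>w\<in>D. w \<prec> b \<and> sat K (e(x := u, y := w)) g))"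
    using coll[unfolded Pi_collection_def, rule_format, of g x y e a] g(1) yR(1) h by blast
  obtain S where S: "supported K R S" using definable_supported[OF yR(2)] by blast
  obtain bv where bv: "bv \<notin> S \<union> {x, y}" using fresh_var[of "S \<union> {x, y}"] supported_finite[OF S] by auto
  have "definable K False n (bex_below K y bv R)"
    using definable_Pi_bex_below[OF order.refl _ yR(2)] bv by simp
  moreover have e': "env_in K (e(bv := b))" using env_in_upd h(2) b(1) .
  moreover have "bex_below K y bv R (e(bv := b, x := t)) = sat K (e(x := t)) f" if "t \<in> D" "t \<prec> a" for t
  proof -
    have R_upd: "R (e(bv := b, x := t, y := w)) = R (e(x := t, y := w))" if "w \<in> D" for w
      by (rule supported_eq[OF S]) (use that \<open>t \<in> D\<close> h(2) e' bv in \<open>auto intro!: env_in_upd\<close>)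
    have R_g: "R (e(x := t, y := w)) = sat K (e(x := t, y := w)) g" if "w \<in> D" for w
      using g(2) env_in_upd[OF env_in_upd[OF h(2) \<open>t \<in> D\<close>] that] by blast
    show ?thesis
      using b(2) that yR(3) env_in_upd[OF h(2) \<open>t \<in> D\<close>] bv R_upd R_g
      unfolding bex_below_def by (auto cong: conj_cong)
  qed
  ultimately show "\<exists>Q e'. definable K False n Q \<and> env_in K e' \<and> (\<forall>t\<in>D. t \<prec> a \<longrightarrow> Q (e'(x := t)) = sat K (e(x := t)) f)"
    by (intro exI[of _ "bex_below K y bv R"] exI[of _ "e(bv := b)"]) blast
qed

theorem M_ISigma_iff:
  "(M_ISigma (Suc n) M K \<longleftrightarrow> Sigma_coded (Suc n) M K eps vx vy)
    \<and> (M_ISigma (Suc n) M K \<longleftrightarrow> Pi_collection n M K)"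
  using M_ISigma_imp_Sigma_coded Sigma_coded_imp_M_ISigma M_ISigma_imp_Pi_collection Pi_collection_imp_M_ISigma
  by blast

end

theorem lemma4p5:
  fixes n :: nat and M :: "'a set" and K :: "'a struc"
    and eps :: fm and vx vy :: nat
  assumes "IDelta0_exp (restr K M) eps vx vy"
    and "ISigma_exp n K eps vx vy"
    and "end_ext M K"
  shows "(M_ISigma (Suc n) M K \<longleftrightarrow>
           (\<forall>f x e a. Sigma (Suc n) f \<and> env_in K e \<and> a \<in> M \<longrightarrow>
              (\<exists>c\<in>dom K. \<forall>u\<in>dom K. lt K u a \<longrightarrow>
                 (sat K (e(x := u)) f \<longleftrightarrow> bit_in K eps vx vy u c))))
       \<and> (M_ISigma (Suc n) M K \<longleftrightarrow>
           (\<forall>g x y e a. Pi n g \<and> x \<noteq> y \<and> env_in K e \<and> a \<in> M \<longrightarrow>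
              (\<exists>b\<in>dom K. \<forall>u\<in>dom K. lt K u a \<longrightarrow>
                 ((\<exists>w\<in>dom K. sat K (e(x := u, y := w)) g)
                  \<longleftrightarrow> (\<exists>w\<in>dom K. lt K w b \<and> sat K (e(x := u, y := w)) g)))))"
proof -
  have K: "PAminus K" "\<And>f x. Sigma n f \<Longrightarrow> ind K f x" "exp_ok K eps vx vy"
    using assms(2) unfolding ISigma_exp_def by auto
  interpret end_extension K eps vx vy n M
    by unfold_locales (use K assms(1,3) hier_delta0 in \<open>auto simp: IDelta0_exp_def\<close>)
  show ?thesis
    using M_ISigma_iff unfolding Sigma_coded_def Pi_collection_def .
qed

end
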